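(* For all $\lambda,\mu\in\mathbb{C}$ the following are decompositions into direct sums of $\mathcal{K}$-submodules: (1) $\mathcal{D}_{\lambda,1/2}=\mathcal{D}^0_{\lambda,1/2}\oplus\{\bar d\circ T:T\in\mathcal{D}_{\lambda,0}\}$; (2) $\Psi^{-1/2,1}_{\lambda,0}=\Psi^{-1,0}_{\lambda,0}\oplus\{T\in\Psi^{-1/2,1}_{\lambda,0}:\bar d\circ T\in\mathcal{D}^0_{\lambda,1/2}\}$; (3) $\mathcal{D}_{0,\mu}=\mathcal{D}^0_{0,\mu}\oplus\{T\circ\bar d:T\in\mathcal{D}_{1/2,\mu}\}$; (4) $\Psi^{-1/2,1}_{1/2,\mu}=\Psi^{-1,0}_{1/2,\mu}\oplus\{T\in\Psi^{-1/2,1}_{1/2,\mu}:T\circ\bar d\in\mathcal{D}^0_{0,\mu}\}$; (5) $\mathcal{D}_{0,1/2}=\mathcal{D}^{1/2}_{0,1/2}\oplus\{\bar d\circ T\circ\bar d:T\in\mathcal{D}_{1/2,0}\}$; (6) $\Psi^{-1/2,1}_{1/2,0}=\Psi^{-3/2,1}_{1/2,0}\oplus\{T\in\Psi^{-1/2,1}_{1/2,0}:\bar d\circ T\circ\bar d\in\mathcal{D}^{1/2}_{0,1/2}\}$.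
   Context: Work over $\mathbb{C}$ on the superline $\mathbb{R}^{1|1}$ in the polynomial category. Let $\mathbb{C}[x,\xi]$ be the polynomial superalgebra with even coordinate $x$ and odd coordinate $\xi$ ($\xi^2=0$), $D=\partial_\xi+\xi\partial_x$, $\bar D=\partial_\xi-\xi\partial_x$. For $F\in\mathbb{C}[x,\xi]$ put $X_F=F\partial_x+\tfrac12 D(F)\bar D$; $\mathcal{K}=\{X_F\}$ is the Lie superalgebra of contact vector fields. For $\nu\in\mathbb{C}$, $\mathcal{F}_\nu=\alpha^\nu\mathbb{C}[x,\xi]$ ($\alpha^\nu$ formal, even) with action $L_\nu(X_F)(\alpha^\nu G)=\alpha^\nu(X_F(G)+\nu\,\partial_x(F)\,G)$. For $\lambda,\mu$ put $\delta=\mu-\lambda$. For $z\in\mathbb{C}$ let $\bar D^z_0=e^{i\pi z/2}\partial_x^{z/2}$ (even), $\bar D^z_1=e^{i\pi(z-1)/2}\partial_x^{(z-1)/2}\bar D$ (odd); for $j\in\mathbb{N}$, $\bar D^j_{j\bmod 2}=\bar D^j$. For $k\in\mathbb{C}$, $p\in\mathbb{Z}_2$, $\Psi^{k,p}_{\lambda,\mu}=\{\alpha^{\delta}\sum_{j\in\mathbb{N}}T_{2k-j}\bar D^{2k-j}_{p+(j\bmod 2)}:T_{2k-j}\in\mathbb{C}[x,\xi]\}$ (formal series), with composition $\Psi_{\mu,\nu}\times\Psi_{\lambda,\mu}\to\Psi_{\lambda,\nu}$ defined by $\bar D^{z'}_{p'}\circ\bar D^z_p=\bar D^{z+z'}_{p+p'}$,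 $[\bar D,\partial_x^z]=0$, $\partial_x^z\circ F=\sum_{j}\binom{z}{j}\partial_x^j(F)\circ\partial_x^{z-j}$, and $\mathcal{K}$-action $L_{\lambda,\mu}(X)(T)=L_\mu(X)\circ T-(-1)^{|X||T|}T\circ L_\lambda(X)$. The space of differential operators $\mathcal{D}_{\lambda,\mu}$ consists of the finite sums $\alpha^\delta\sum_{j=0}^{N}T_j\bar D^j$ with $T_j\in\mathbb{C}[x,\xi]$, and for $k\in\tfrac12\mathbb{N}$, $\mathcal{D}^k_{\lambda,\mu}$ is the subspace of those with $T_j=0$ for $j>2k$. The first super Bol operator is $\bar d=\alpha^{1/2}\bar D:\mathcal{F}_0\to\mathcal{F}_{1/2}$, an element of $\Psi^{1/2,1}_{0,1/2}$. *)

theory Defs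
  imports Complex_Main "HOL-Computational_Algebra.Polynomial"
    "HOL-Library.Function_Algebras" "HOL-Library.Product_Plus"
begin

text \<open>A superfunction  g0(x) + xi * g1(x)  is represented by the pair (g0, g1).\<close>

type_synonym spoly = "complex poly \<times> complex poly"

definition sp_mult :: "spoly \<Rightarrow> spoly \<Rightarrow> spoly" where
  "sp_mult a b = (fst a * fst b, fst a * snd b + snd a * fst b)"

definition sp_scale :: "complex \<Rightarrow> spoly \<Rightarrow> spoly" where
  "sp_scale c a = (smult c (fst a), smult c (snd a))"

definition sp_dx :: "spoly \<Rightarrow> spoly" where
  "sp_dx a = (pderiv (fst a), pderiv (snd a))"

text \<open>D = partial_xi + xi partial_x\<close>
definition sp_D :: "spoly \<Rightarrow> spoly" where
  "sp_D a = (snd a, pderiv (fst a))"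

text \<open>Dbar = partial_xi - xi partial_x\<close>
definition sp_Dbar :: "spoly \<Rightarrow> spoly" where
  "sp_Dbar a = (snd a, - pderiv (fst a))"

text \<open>G  |->  (-1)^|G| G  (extended linearly)\<close>
definition sp_sigma :: "spoly \<Rightarrow> spoly" where
  "sp_sigma a = (fst a, - snd a)"

text \<open>a bound beyond which all x-derivatives of G vanish\<close>
definition sdeg :: "spoly \<Rightarrow> nat" where
  "sdeg a = Suc (max (degree (fst a)) (degree (snd a)))"

text \<open>A symbol  alpha^delta * sum T_(z,q) Dbar^z_q  is represented by its coefficient
  function: T z q is the coefficient (in C[x,xi]) of Dbar^z_q, where q = True means
  parity index 1 and q = False means 0.  The formal factor alpha^delta is not stored;
  it enters only through the weights lambda, mu of the K-action.\<close>

type_synonym symb = "complex \<Rightarrow> bool \<Rightarrow> spoly"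

definition sscale :: "complex \<Rightarrow> symb \<Rightarrow> symb" where
  "sscale c T = (\<lambda>z q. sp_scale c (T z q))"

definition lmult :: "spoly \<Rightarrow> symb \<Rightarrow> symb" where
  "lmult G T = (\<lambda>z q. sp_mult G (T z q))"

text \<open>Dbar o T, using  Dbar o G = Dbar(G) + (-1)^|G| G Dbar  and
  Dbar^1_1 o Dbar^z_q = Dbar^(z+1)_(q+1)\<close>
definition lcompD :: "symb \<Rightarrow> symb" where
  "lcompD T = (\<lambda>z q. sp_Dbar (T z q) + sp_sigma (T (z - 1) (\<not> q)))"

text \<open>T o Dbar, using  Dbar^z_q o Dbar^1_1 = Dbar^(z+1)_(q+1)\<close>
definition rcompD :: "symb \<Rightarrow> symb" where
  "rcompD T = (\<lambda>z q. T (z - 1) (\<not> q))"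

text \<open>T o G for a superfunction G, using
  Dbar^z_0 o G = sum_j (-1)^j (z/2 choose j) (partial_x^j G) Dbar^(z-2j)_0
  (which is  partial_x^w o G = sum_j (w choose j) partial_x^j(G) partial_x^(w-j)
   rewritten via Dbar^z_0 = e^(i pi z/2) partial_x^(z/2)), and
  Dbar^z_1 = Dbar^(z-1)_0 o Dbar, Dbar o G = Dbar(G) + (-1)^|G| G Dbar.\<close>
definition rcomp :: "symb \<Rightarrow> spoly \<Rightarrow> symb" where
  "rcomp T G = (\<lambda>w r.
     if \<not> r then
       (\<Sum>j\<le>sdeg G. sp_scale ((-1) ^ j * (((w + 2 * of_nat j) / 2) gchoose j))
          (sp_mult (T (w + 2 * of_nat j) False) ((sp_dx ^^ j) G)
           + sp_mult (T (w + 1 + 2 * of_nat j) True) ((sp_dx ^^ j) (sp_Dbar G))))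
     else
       (\<Sum>j\<le>sdeg G. sp_scale ((-1) ^ j * (((w + 2 * of_nat j - 1) / 2) gchoose j))
          (sp_mult (T (w + 2 * of_nat j) True) ((sp_dx ^^ j) (sp_sigma G)))))"

text \<open>even and odd parts of a symbol (parity of G Dbar^z_q is |G| + q)\<close>
definition sev :: "symb \<Rightarrow> symb" where
  "sev T = (\<lambda>z q. if q then (0, snd (T z q)) else (fst (T z q), 0))"

definition sod :: "symb \<Rightarrow> symb" where
  "sod T = T - sev T"

text \<open>L_nu(X_F) o T  with  L_nu(X_F) = F partial_x + 1/2 D(F) Dbar + nu F',
  and partial_x = - Dbar o Dbar\<close>
definition Lop :: "complex \<Rightarrow> spoly \<Rightarrow> symb \<Rightarrow> symb" where
  "Lop nu F T = (\<lambda>z q.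
      sp_mult F ((- lcompD (lcompD T)) z q)
    + sp_scale (1/2) (sp_mult (sp_D F) (lcompD T z q))
    + sp_scale nu (sp_mult (sp_dx F) (T z q)))"

definition Rop :: "complex \<Rightarrow> spoly \<Rightarrow> symb \<Rightarrow> symb" where
  "Rop nu F T =
      - rcompD (rcompD (rcomp T F))
    + sscale (1/2) (rcompD (rcomp T (sp_D F)))
    + sscale nu (rcomp T (sp_dx F))"

text \<open>L_{lambda,mu}(X_F)(T) = L_mu(X_F) o T - (-1)^(|X||T|) T o L_lambda(X_F),
  defined on homogeneous parts of F and T and extended linearly.\<close>
definition act :: "complex \<Rightarrow> complex \<Rightarrow> spoly \<Rightarrow> symb \<Rightarrow> symb" where
  "act lam mu F T =
     (let Fe = (fst F, 0); Fo = (0, snd F) in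
       (Lop mu Fe T - Rop lam Fe T)
     + (Lop mu Fo T - Rop lam Fo (sev T) + Rop lam Fo (sod T)))"

text \<open>Psi^{k,p}: formal series sum_j T_(2k-j) Dbar^(2k-j)_(p + j mod 2)\<close>
definition Psi :: "complex \<Rightarrow> bool \<Rightarrow> symb set" where
  "Psi k p = {T. \<forall>z q. T z q \<noteq> 0 \<longrightarrow>
                 (\<exists>j::nat. z = 2 * k - of_nat j \<and> q = (p \<noteq> odd j))}"

text \<open>differential operators: finite sums  sum_j T_j Dbar^j,  Dbar^j = Dbar^j_(j mod 2)\<close>
definition Dop :: "symb set" where
  "Dop = {T. (\<forall>z q. T z q \<noteq> 0 \<longrightarrow> (\<exists>j::nat. z = of_nat j \<and> q = odd j))
           \<and> finite {z. \<exists>q. T z q \<noteq> 0}}"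

text \<open>D^k (k in 1/2 N): differential operators of order at most 2k\<close>
definition Dop_le :: "real \<Rightarrow> symb set" where
  "Dop_le k = {T \<in> Dop. \<forall>z q. T z q \<noteq> 0 \<longrightarrow> Re z \<le> 2 * k}"

text \<open>composition with the first super Bol operator  dbar = alpha^(1/2) Dbar\<close>
definition dbar_left :: "symb \<Rightarrow> symb" where "dbar_left T = lcompD T"
definition dbar_right :: "symb \<Rightarrow> symb" where "dbar_right T = rcompD T"

definition Ksub :: "complex \<Rightarrow> complex \<Rightarrow> symb set \<Rightarrow> bool" where
  "Ksub lam mu S \<longleftrightarrow> 0 \<in> S \<and> (\<forall>a\<in>S. \<forall>b\<in>S. a + b \<in> S)
     \<and> (\<forall>c. \<forall>a\<in>S. sscale c a \<in> S) \<and> (\<forall>F. \<forall>a\<in>S. act lam mu F a \<in> S)"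

definition Kdirect :: "complex \<Rightarrow> complex \<Rightarrow> symb set \<Rightarrow> symb set \<Rightarrow> symb set \<Rightarrow> bool" where
  "Kdirect lam mu V A B \<longleftrightarrow> Ksub lam mu A \<and> Ksub lam mu B \<and> A \<inter> B = {0}
     \<and> V = {a + b | a b. a \<in> A \<and> b \<in> B}"

end

theory Submission
  imports Defs
begin

text \<open>Composition with \<open>Dbar\<close> shifts the weights of the \<open>\<K>\<close>-action by \<open>1/2\<close>: \<open>Dbar \<circ> T\<close> intertwines
  the actions of weights \<open>(\<lambda>, 0)\<close> and \<open>(\<lambda>, 1/2)\<close> (with \<open>X_F\<close> twisted by the parity involution), and
  \<open>T \<circ> Dbar\<close> those of weights \<open>(1/2, \<mu>)\<close> and \<open>(0, \<mu>)\<close>; this is the equivariance of the super Bol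
  operator \<open>dbar\<close>. The action also preserves every order filtration \<open>\<Psi>^(k,p)\<close> and \<open>D^k\<close>: the symbol
  of \<open>L_\<mu>(X_F) \<circ> T - T \<circ> L_\<lambda>(X_F)\<close> formally has order one more than \<open>T\<close>, but its two top
  coefficients cancel. So all twelve summands are \<open>\<K>\<close>-submodules, and the six decompositions become
  statements about symbols alone. Directness holds because \<open>Dbar\<close> strictly raises the order, so a
  composite of order \<open>0\<close> (resp. \<open>1/2\<close>) forces \<open>T = 0\<close> by descending induction on the coefficients;
  exhaustion holds because the top coefficients of any symbol can be peeled off by a composite with
  \<open>Dbar\<close>, for the pseudodifferential case (2) using the symbol of \<open>Dbar^(-1) \<circ> s\<close>, whose coefficients
  are determined recursively.\<close>

lemma fst_sp_mult[simp]: "fst (sp_mult a b) = fst a * fst b" by (simp add: sp_mult_def)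
lemma snd_sp_mult[simp]: "snd (sp_mult a b) = fst a * snd b + snd a * fst b" by (simp add: sp_mult_def)
lemma fst_sp_Dbar[simp]: "fst (sp_Dbar a) = snd a" by (simp add: sp_Dbar_def)
lemma snd_sp_Dbar[simp]: "snd (sp_Dbar a) = - pderiv (fst a)" by (simp add: sp_Dbar_def)
lemma fst_sp_D[simp]: "fst (sp_D a) = snd a" by (simp add: sp_D_def)
lemma snd_sp_D[simp]: "snd (sp_D a) = pderiv (fst a)" by (simp add: sp_D_def)
lemma fst_sp_sigma[simp]: "fst (sp_sigma a) = fst a" by (simp add: sp_sigma_def)
lemma snd_sp_sigma[simp]: "snd (sp_sigma a) = - snd a" by (simp add: sp_sigma_def)
lemma fst_sp_dx[simp]: "fst (sp_dx a) = pderiv (fst a)" by (simp add: sp_dx_def)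
lemma snd_sp_dx[simp]: "snd (sp_dx a) = pderiv (snd a)" by (simp add: sp_dx_def)
lemma fst_sp_scale[simp]: "fst (sp_scale c a) = smult c (fst a)" by (simp add: sp_scale_def)
lemma snd_sp_scale[simp]: "snd (sp_scale c a) = smult c (snd a)" by (simp add: sp_scale_def)

lemmas pderiv_arith = pderiv_add pderiv_minus pderiv_diff pderiv_mult pderiv_smult

lemma sp_mult_add_left: "sp_mult (a + b) c = sp_mult a c + sp_mult b c" by (simp add: prod_eq_iff algebra_simps)
lemma sp_mult_minus_left: "sp_mult (- a) c = - sp_mult a c" by (simp add: prod_eq_iff algebra_simps)
lemma sp_mult_minus_right: "sp_mult c (- a) = - sp_mult c a" by (simp add: prod_eq_iff algebra_simps)
lemma sp_mult_zero_left[simp]: "sp_mult 0 c = 0" by (simp add: prod_eq_iff)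
lemma sp_mult_zero_right[simp]: "sp_mult c 0 = 0" by (simp add: prod_eq_iff)

lemma sp_scale_add: "sp_scale k (a + b) = sp_scale k a + sp_scale k b" by (simp add: prod_eq_iff smult_add_right)
lemma sp_scale_diff: "sp_scale k (a - b) = sp_scale k a - sp_scale k b" by (simp add: prod_eq_iff smult_diff_right)
lemma sp_scale_minus: "sp_scale k (- a) = - sp_scale k a" by (simp add: prod_eq_iff)
lemma sp_scale_zero[simp]: "sp_scale k 0 = 0" by (simp add: prod_eq_iff)
lemma sp_scale_zero_left[simp]: "sp_scale 0 a = 0" by (simp add: prod_eq_iff)
lemma sp_scale_one[simp]: "sp_scale 1 a = a" by (simp add: prod_eq_iff)
lemma sp_scale_diff_left: "sp_scale (k - l) a = sp_scale k a - sp_scale l a" by (simp add: prod_eq_iff smult_diff_left)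

lemma sp_Dbar_add: "sp_Dbar (a + b) = sp_Dbar a + sp_Dbar b" by (simp add: prod_eq_iff pderiv_arith)
lemma sp_Dbar_minus: "sp_Dbar (- a) = - sp_Dbar a" by (simp add: prod_eq_iff pderiv_arith)
lemma sp_Dbar_zero[simp]: "sp_Dbar 0 = 0" by (simp add: prod_eq_iff)
lemma sp_Dbar_scale: "sp_Dbar (sp_scale k a) = sp_scale k (sp_Dbar a)" by (simp add: prod_eq_iff pderiv_arith)
lemma sp_Dbar_sum: "sp_Dbar (\<Sum>i\<in>A. f i) = (\<Sum>i\<in>A. sp_Dbar (f i))"
  by (induct A rule: infinite_finite_induct) (simp_all add: sp_Dbar_add)
lemma sp_sigma_add: "sp_sigma (a + b) = sp_sigma a + sp_sigma b" by (simp add: prod_eq_iff)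
lemma sp_sigma_minus: "sp_sigma (- a) = - sp_sigma a" by (simp add: prod_eq_iff)
lemma sp_sigma_zero[simp]: "sp_sigma 0 = 0" by (simp add: prod_eq_iff)
lemma sp_sigma_scale: "sp_sigma (sp_scale k a) = sp_scale k (sp_sigma a)" by (simp add: prod_eq_iff)
lemma sp_sigma_sum: "sp_sigma (\<Sum>i\<in>A. f i) = (\<Sum>i\<in>A. sp_sigma (f i))"
  by (induct A rule: infinite_finite_induct) (simp_all add: sp_sigma_add)
lemma sp_sigma_sigma[simp]: "sp_sigma (sp_sigma a) = a" by (simp add: prod_eq_iff)
lemma sp_sigma_eq_0D: "sp_sigma a = 0 \<Longrightarrow> a = 0"
  by (metis sp_sigma_sigma sp_sigma_zero)

lemma sp_sigma_mult: "sp_sigma (sp_mult a b) = sp_mult (sp_sigma a) (sp_sigma b)" by (simp add: prod_eq_iff)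
lemma sp_Dbar_mult: "sp_Dbar (sp_mult a b) = sp_mult (sp_Dbar a) b + sp_mult (sp_sigma a) (sp_Dbar b)"
  by (simp add: prod_eq_iff pderiv_arith algebra_simps)
lemma sp_Dbar_sigma: "sp_Dbar (sp_sigma a) = - sp_sigma (sp_Dbar a)" by (simp add: prod_eq_iff)
lemma sp_Dbar_Dbar: "sp_Dbar (sp_Dbar a) = - sp_dx a" by (simp add: prod_eq_iff)
lemma sp_dx_minus: "sp_dx (- a) = - sp_dx a" by (simp add: prod_eq_iff pderiv_arith)
lemma sp_dx_zero[simp]: "sp_dx 0 = 0" by (simp add: prod_eq_iff)
lemma sp_D_minus: "sp_D (- a) = - sp_D a" by (simp add: prod_eq_iff pderiv_arith)

lemma sp_dx_pow_minus: "(sp_dx ^^ j) (- a) = - (sp_dx ^^ j) a" by (induct j) (simp_all add: sp_dx_minus)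
lemma sp_dx_pow_zero[simp]: "(sp_dx ^^ j) 0 = 0" by (induct j) simp_all
lemma sp_dx_pow_Dbar: "(sp_dx ^^ j) (sp_Dbar a) = sp_Dbar ((sp_dx ^^ j) a)"
  by (induct j) (simp_all, simp add: prod_eq_iff pderiv_arith)
lemma sp_dx_pow_sigma: "(sp_dx ^^ j) (sp_sigma a) = sp_sigma ((sp_dx ^^ j) a)"
  by (induct j) (simp_all, simp add: prod_eq_iff pderiv_arith)
lemma sp_dx_pow_Suc: "(sp_dx ^^ j) (sp_dx a) = (sp_dx ^^ Suc j) a"
  by (simp add: funpow_Suc_right del: funpow.simps)
lemma sp_dx_pow_components: "(sp_dx ^^ j) a = ((pderiv ^^ j) (fst a), (pderiv ^^ j) (snd a))"
  by (induct j) (simp_all add: sp_dx_def)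

lemma higher_pderiv_eq_0: "degree p < n \<Longrightarrow> (pderiv ^^ n) p = 0"
  by (intro poly_eqI) (simp add: coeff_higher_pderiv coeff_eq_0)

lemma sp_dx_pow_vanish: "sdeg a \<le> j \<Longrightarrow> (sp_dx ^^ j) a = 0"
  unfolding sp_dx_pow_components sdeg_def by (simp add: higher_pderiv_eq_0 prod_eq_iff)

lemma sscale_apply[simp]: "sscale c T z q = sp_scale c (T z q)" by (simp add: sscale_def)
lemma lmult_apply[simp]: "lmult G T z q = sp_mult G (T z q)" by (simp add: lmult_def)
lemma lcompD_apply[simp]: "lcompD T z q = sp_Dbar (T z q) + sp_sigma (T (z - 1) (\<not> q))" by (simp add: lcompD_def)
lemma rcompD_apply[simp]: "rcompD T z q = T (z - 1) (\<not> q)" by (simp add: rcompD_def)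

lemma sev_apply: "sev T z q = (if q then (0, snd (T z q)) else (fst (T z q), 0))" by (simp add: sev_def)
lemma sod_apply: "sod T z q = (if q then (fst (T z q), 0) else (0, snd (T z q)))"
  by (simp add: sod_def sev_def prod_eq_iff)

lemma sev_lcompD: "sev (lcompD T) = lcompD (sod T)"
  by (intro ext) (simp add: sev_apply sod_apply prod_eq_iff pderiv_arith)
lemma sod_lcompD: "sod (lcompD T) = lcompD (sev T)"
  by (intro ext) (simp add: sev_apply sod_apply prod_eq_iff pderiv_arith)
lemma sev_rcompD: "sev (rcompD T) = rcompD (sod T)"
  by (intro ext) (simp add: sev_apply sod_apply prod_eq_iff pderiv_arith)
lemma sod_rcompD: "sod (rcompD T) = rcompD (sev T)"
  by (intro ext) (simp add: sev_apply sod_apply prod_eq_iff pderiv_arith)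

lemma lcompD_add: "lcompD (A + B) = lcompD A + lcompD B" by (intro ext) (simp add: prod_eq_iff pderiv_arith)
lemma lcompD_minus: "lcompD (- A) = - lcompD A" by (intro ext) (simp add: prod_eq_iff pderiv_arith)
lemma lcompD_diff: "lcompD (A - B) = lcompD A - lcompD B" by (intro ext) (simp add: prod_eq_iff pderiv_arith)
lemma lcompD_zero[simp]: "lcompD 0 = 0" by (intro ext) (simp add: prod_eq_iff)
lemma lcompD_sscale: "lcompD (sscale c A) = sscale c (lcompD A)" by (intro ext) (simp add: prod_eq_iff pderiv_arith smult_add_right smult_diff_right)
lemma rcompD_add: "rcompD (A + B) = rcompD A + rcompD B" by (intro ext) simp
lemma rcompD_minus: "rcompD (- A) = - rcompD A" by (intro ext) simp
lemma rcompD_diff: "rcompD (A - B) = rcompD A - rcompD B" by (intro ext) simp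
lemma rcompD_zero[simp]: "rcompD 0 = 0" by (intro ext) simp
lemma rcompD_sscale: "rcompD (sscale c A) = sscale c (rcompD A)" by (intro ext) simp
lemma lcompD_rcompD: "lcompD (rcompD T) = rcompD (lcompD T)" by (intro ext) simp
lemma sscale_minus: "sscale c (- A) = - sscale c A" by (intro ext) (simp add: sp_scale_minus)
lemma sscale_zero[simp]: "sscale c 0 = 0" by (intro ext) simp
lemma sscale_zero_left[simp]: "sscale 0 A = 0" by (intro ext) simp

definition rcomp_coeff0 :: "complex \<Rightarrow> nat \<Rightarrow> complex" where
  "rcomp_coeff0 w j = (-1) ^ j * (((w + 2 * of_nat j) / 2) gchoose j)"
definition rcomp_coeff1 :: "complex \<Rightarrow> nat \<Rightarrow> complex" where
  "rcomp_coeff1 w j = (-1) ^ j * (((w + 2 * of_nat j - 1) / 2) gchoose j)"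

lemma rcomp_par0: "rcomp T G w False = (\<Sum>j\<le>sdeg G. sp_scale (rcomp_coeff0 w j)
   (sp_mult (T (w + 2 * of_nat j) False) ((sp_dx ^^ j) G)
    + sp_mult (T (w + 1 + 2 * of_nat j) True) ((sp_dx ^^ j) (sp_Dbar G))))"
  by (simp add: rcomp_def rcomp_coeff0_def)
lemma rcomp_par1: "rcomp T G w True = (\<Sum>j\<le>sdeg G. sp_scale (rcomp_coeff1 w j)
   (sp_mult (T (w + 2 * of_nat j) True) ((sp_dx ^^ j) (sp_sigma G))))"
  by (simp add: rcomp_def rcomp_coeff1_def)

lemma sum_atMost_extend:
  fixes M N :: nat
  assumes "M \<le> N" "\<And>j. M < j \<Longrightarrow> j \<le> N \<Longrightarrow> f j = 0"
  shows "(\<Sum>j\<le>N. f j) = (\<Sum>j\<le>M. f j)"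
  proof (rule sum.mono_neutral_right)
  show "{..M} \<subseteq> {..N}" using assms(1) by auto
  show "\<forall>i\<in>{..N} - {..M}. f i = 0" using assms(2) by (simp add: not_le)
qed simp

lemma rcomp_par0_upto: "sdeg G \<le> N \<Longrightarrow> rcomp T G w False = (\<Sum>j\<le>N. sp_scale (rcomp_coeff0 w j)
   (sp_mult (T (w + 2 * of_nat j) False) ((sp_dx ^^ j) G)
    + sp_mult (T (w + 1 + 2 * of_nat j) True) ((sp_dx ^^ j) (sp_Dbar G))))"
  unfolding rcomp_par0 by (rule sum_atMost_extend[symmetric]) (simp_all add: sp_dx_pow_vanish sp_dx_pow_Dbar)
lemma rcomp_par1_upto: "sdeg G \<le> N \<Longrightarrow> rcomp T G w True = (\<Sum>j\<le>N. sp_scale (rcomp_coeff1 w j)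
   (sp_mult (T (w + 2 * of_nat j) True) ((sp_dx ^^ j) (sp_sigma G))))"
  unfolding rcomp_par1 by (rule sum_atMost_extend[symmetric]) (simp_all add: sp_dx_pow_vanish sp_dx_pow_sigma)

lemma sum_sp_scale_shift:
  fixes c d :: "nat \<Rightarrow> complex" and P :: "nat \<Rightarrow> spoly"
  assumes "d 0 = c 0" "\<And>i. c (Suc i) = d (Suc i) - c i"
  shows "(\<Sum>j\<le>N. sp_scale (c j) (P j)) = (\<Sum>j\<le>N. sp_scale (d j) (P j))
           - (\<Sum>j\<le>N. sp_scale (c j) (P (Suc j))) + sp_scale (c N) (P (Suc N))"
proof (induct N)
  case 0 then show ?case using assms by simp
next
  case (Suc N)
  have "sp_scale (c (Suc N)) (P (Suc N)) = sp_scale (d (Suc N)) (P (Suc N)) - sp_scale (c N) (P (Suc N))"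
    using assms(2)[of N] by (simp add: sp_scale_diff_left)
  then show ?case using Suc by (simp add: algebra_simps)
qed

lemma rcomp_coeff0_Suc: "rcomp_coeff0 w (Suc i) = rcomp_coeff1 (w - 1) (Suc i) - rcomp_coeff0 w i"
proof -
  let ?a = "(w + 2 * of_nat i) / 2"
  have e1: "(w + 2 * of_nat (Suc i)) / 2 = ?a + 1" by (simp add: field_simps)
  have e2: "(w - 1 + 2 * of_nat (Suc i) - 1) / 2 = ?a" by (simp add: field_simps)
  show ?thesis unfolding rcomp_coeff0_def rcomp_coeff1_def e1 e2 gbinomial_Suc_Suc by (simp add: algebra_simps)
qed

lemma rcomp_coeff0_shift: "rcomp_coeff0 (w - 1) j = rcomp_coeff1 w j"
  unfolding rcomp_coeff0_def rcomp_coeff1_def by (simp add: algebra_simps)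

text \<open>Associativity \<open>(Dbar \<circ> T) \<circ> G = Dbar \<circ> (T \<circ> G)\<close>: after expansion the two sides differ by a
  telescoping sum (summation by parts with Pascal's rule \<open>rcomp_coeff0_Suc\<close>).\<close>

lemma lcompD_rcomp_par0: "lcompD (rcomp T G) w False = rcomp (lcompD T) G w False"
proof -
  define N where "N = sdeg G"
  define P where "P j = sp_mult (sp_sigma (T (w + 2 * of_nat j - 1) True)) ((sp_dx ^^ j) G)" for j
  define Q where "Q j = sp_mult (sp_Dbar (T (w + 2 * of_nat j) False)) ((sp_dx ^^ j) G)
     + sp_mult (sp_sigma (T (w + 2 * of_nat j) False)) (sp_Dbar ((sp_dx ^^ j) G))
     + sp_mult (sp_Dbar (T (w + 1 + 2 * of_nat j) True)) (sp_Dbar ((sp_dx ^^ j) G))" for j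
  have i1: "w + 2 * of_nat (Suc j) - 1 = w + 1 + 2 * of_nat j" for j by (simp add: algebra_simps)
  have i2: "w - 1 + 2 * of_nat j = w + 2 * of_nat j - 1" for j by (simp add: algebra_simps)
  have i3: "w + 1 + 2 * of_nat j - 1 = w + 2 * of_nat j" for j by (simp add: algebra_simps)
  have PS: "P (Suc j) = sp_mult (sp_sigma (T (w + 1 + 2 * of_nat j) True)) (sp_dx ((sp_dx ^^ j) G))" for j
    unfolding P_def i1 by simp
  have A: "sp_Dbar (sp_scale (rcomp_coeff0 w j)
   (sp_mult (T (w + 2 * of_nat j) False) ((sp_dx ^^ j) G)
    + sp_mult (T (w + 1 + 2 * of_nat j) True) ((sp_dx ^^ j) (sp_Dbar G))))
    = sp_scale (rcomp_coeff0 w j) (Q j) - sp_scale (rcomp_coeff0 w j) (P (Suc j))" for j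
    unfolding Q_def PS sp_dx_pow_Dbar
    by (simp add: sp_Dbar_scale sp_Dbar_add sp_Dbar_mult sp_Dbar_Dbar sp_mult_minus_right
        sp_scale_add sp_scale_diff sp_scale_minus algebra_simps)
  have B: "sp_sigma (sp_scale (rcomp_coeff1 (w - 1) j)
     (sp_mult (T (w - 1 + 2 * of_nat j) True) ((sp_dx ^^ j) (sp_sigma G))))
     = sp_scale (rcomp_coeff1 (w - 1) j) (P j)" for j
    unfolding P_def i2 sp_dx_pow_sigma by (simp add: sp_sigma_scale sp_sigma_mult)
  have L: "lcompD (rcomp T G) w False = (\<Sum>j\<le>N. sp_scale (rcomp_coeff0 w j) (Q j))
      - (\<Sum>j\<le>N. sp_scale (rcomp_coeff0 w j) (P (Suc j))) + (\<Sum>j\<le>N. sp_scale (rcomp_coeff1 (w - 1) j) (P j))"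
    unfolding lcompD_apply not_False_eq_True rcomp_par0 rcomp_par1 N_def[symmetric] sp_Dbar_sum sp_sigma_sum A B
    by (simp add: sum_subtractf)
  have C: "sp_scale (rcomp_coeff0 w j)
   (sp_mult (lcompD T (w + 2 * of_nat j) False) ((sp_dx ^^ j) G)
    + sp_mult (lcompD T (w + 1 + 2 * of_nat j) True) ((sp_dx ^^ j) (sp_Dbar G)))
    = sp_scale (rcomp_coeff0 w j) (Q j) + sp_scale (rcomp_coeff0 w j) (P j)" for j
    unfolding Q_def P_def lcompD_apply sp_dx_pow_Dbar i3
    by (simp add: sp_mult_add_left sp_scale_add algebra_simps)
  have R: "rcomp (lcompD T) G w False = (\<Sum>j\<le>N. sp_scale (rcomp_coeff0 w j) (Q j)) + (\<Sum>j\<le>N. sp_scale (rcomp_coeff0 w j) (P j))"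
    unfolding rcomp_par0 N_def[symmetric] C by (simp add: sum.distrib)
  have PN: "P (Suc N) = 0" unfolding P_def N_def by (simp add: sp_dx_pow_vanish)
  have S: "(\<Sum>j\<le>N. sp_scale (rcomp_coeff0 w j) (P j)) = (\<Sum>j\<le>N. sp_scale (rcomp_coeff1 (w - 1) j) (P j))
           - (\<Sum>j\<le>N. sp_scale (rcomp_coeff0 w j) (P (Suc j))) + sp_scale (rcomp_coeff0 w N) (P (Suc N))"
    by (rule sum_sp_scale_shift) (simp add: rcomp_coeff0_def rcomp_coeff1_def, rule rcomp_coeff0_Suc)
  show ?thesis unfolding L R S PN by simp
qed

lemma lcompD_rcomp_par1: "lcompD (rcomp T G) w True = rcomp (lcompD T) G w True"
proof -
  define N where "N = sdeg G"
  have i2: "w - 1 + 2 * of_nat j = w + 2 * of_nat j - 1" for j by (simp add: algebra_simps)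
  have i4: "w - 1 + 1 + 2 * of_nat j = w + 2 * of_nat j" for j by (simp add: algebra_simps)
  have A: "sp_Dbar (sp_scale (rcomp_coeff1 w j) (sp_mult (T (w + 2 * of_nat j) True) ((sp_dx ^^ j) (sp_sigma G))))
     + sp_sigma (sp_scale (rcomp_coeff0 (w - 1) j)
         (sp_mult (T (w - 1 + 2 * of_nat j) False) ((sp_dx ^^ j) G)
          + sp_mult (T (w - 1 + 1 + 2 * of_nat j) True) ((sp_dx ^^ j) (sp_Dbar G))))
     = sp_scale (rcomp_coeff1 w j) (sp_mult (lcompD T (w + 2 * of_nat j) True) ((sp_dx ^^ j) (sp_sigma G)))" for j
    unfolding rcomp_coeff0_shift i2 i4 lcompD_apply sp_dx_pow_Dbar sp_dx_pow_sigma
    by (simp add: prod_eq_iff pderiv_arith algebra_simps smult_add_right smult_diff_right)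
  show ?thesis
    unfolding lcompD_apply not_True_eq_False rcomp_par0 rcomp_par1 N_def[symmetric] sp_Dbar_sum sp_sigma_sum
    by (simp only: sum.distrib[symmetric] A lcompD_apply not_True_eq_False)
qed

lemma lcompD_rcomp: "lcompD (rcomp T G) = rcomp (lcompD T) G"
proof (intro ext)
  fix w q show "lcompD (rcomp T G) w q = rcomp (lcompD T) G w q"
    by (cases q) (simp_all only: lcompD_rcomp_par0 lcompD_rcomp_par1)
qed

lemma sdeg_Dbar: "sdeg (sp_Dbar G) \<le> sdeg G"
  unfolding sdeg_def by (simp add: degree_pderiv)
lemma sdeg_sigma[simp]: "sdeg (sp_sigma G) = sdeg G"
  unfolding sdeg_def by simp
lemma sdeg_minus[simp]: "sdeg (- G) = sdeg G"
  unfolding sdeg_def by simp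

lemma rcomp_rcompD_par0: "rcomp (rcompD T) G w False = rcomp T (sp_Dbar G) w False + rcompD (rcomp T (sp_sigma G)) w False"
proof -
  define N where "N = sdeg G"
  define P where "P j = sp_mult (T (w + 2 * of_nat j - 1) True) ((sp_dx ^^ j) G)" for j
  define Q where "Q j = sp_mult (T (w + 2 * of_nat j) False) ((sp_dx ^^ j) (sp_Dbar G))" for j
  have i1: "w + 2 * of_nat (Suc j) - 1 = w + 1 + 2 * of_nat j" for j by (simp add: algebra_simps)
  have i2: "w - 1 + 2 * of_nat j = w + 2 * of_nat j - 1" for j by (simp add: algebra_simps)
  have i3: "w + 1 + 2 * of_nat j - 1 = w + 2 * of_nat j" for j by (simp add: algebra_simps)
  have PS: "P (Suc j) = sp_mult (T (w + 1 + 2 * of_nat j) True) (sp_dx ((sp_dx ^^ j) G))" for j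
    unfolding P_def i1 by simp
  have L: "rcomp (rcompD T) G w False = (\<Sum>j\<le>N. sp_scale (rcomp_coeff0 w j) (Q j)) + (\<Sum>j\<le>N. sp_scale (rcomp_coeff0 w j) (P j))"
    unfolding rcomp_par0 N_def[symmetric] rcompD_apply not_False_eq_True not_True_eq_False i3
    by (simp add: sum.distrib[symmetric] P_def Q_def sp_scale_add algebra_simps)
  have R1: "rcomp T (sp_Dbar G) w False = (\<Sum>j\<le>N. sp_scale (rcomp_coeff0 w j) (Q j)) - (\<Sum>j\<le>N. sp_scale (rcomp_coeff0 w j) (P (Suc j)))"
    unfolding rcomp_par0_upto[OF order.trans[OF sdeg_Dbar N_def[symmetric, THEN eq_refl]]] PS
    by (simp add: sum_subtractf[symmetric] Q_def sp_dx_pow_Dbar[symmetric] sp_Dbar_Dbar sp_dx_pow_minus sp_dx_pow_Suc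
          sp_mult_minus_right sp_scale_add sp_scale_minus sp_scale_diff)
  have R2: "rcompD (rcomp T (sp_sigma G)) w False = (\<Sum>j\<le>N. sp_scale (rcomp_coeff1 (w - 1) j) (P j))"
    unfolding rcompD_apply not_False_eq_True rcomp_par1 sdeg_sigma N_def[symmetric]
    by (simp add: P_def i2)
  have PN: "P (Suc N) = 0" unfolding P_def N_def by (simp add: sp_dx_pow_vanish)
  have S: "(\<Sum>j\<le>N. sp_scale (rcomp_coeff0 w j) (P j)) = (\<Sum>j\<le>N. sp_scale (rcomp_coeff1 (w - 1) j) (P j))
           - (\<Sum>j\<le>N. sp_scale (rcomp_coeff0 w j) (P (Suc j))) + sp_scale (rcomp_coeff0 w N) (P (Suc N))"
    by (rule sum_sp_scale_shift) (simp add: rcomp_coeff0_def rcomp_coeff1_def, rule rcomp_coeff0_Suc)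
  show ?thesis unfolding L R1 R2 S PN by simp
qed

lemma rcomp_rcompD_par1: "rcomp (rcompD T) G w True = rcomp T (sp_Dbar G) w True + rcompD (rcomp T (sp_sigma G)) w True"
proof -
  define N where "N = sdeg G"
  have i2: "w - 1 + 2 * of_nat j = w + 2 * of_nat j - 1" for j by (simp add: algebra_simps)
  have i4: "w - 1 + 1 + 2 * of_nat j = w + 2 * of_nat j" for j by (simp add: algebra_simps)
  have A: "sp_scale (rcomp_coeff1 w j) (sp_mult (T (w + 2 * of_nat j - 1) False) ((sp_dx ^^ j) (sp_sigma G)))
     = sp_scale (rcomp_coeff1 w j) (sp_mult (T (w + 2 * of_nat j) True) ((sp_dx ^^ j) (sp_sigma (sp_Dbar G))))
     + sp_scale (rcomp_coeff0 (w - 1) j)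
         (sp_mult (T (w - 1 + 2 * of_nat j) False) ((sp_dx ^^ j) (sp_sigma G))
          + sp_mult (T (w - 1 + 1 + 2 * of_nat j) True) ((sp_dx ^^ j) (sp_Dbar (sp_sigma G))))" for j
    unfolding rcomp_coeff0_shift i2 i4 sp_Dbar_sigma sp_dx_pow_minus
    by (simp add: sp_mult_minus_right sp_scale_add sp_scale_minus sp_scale_diff)
  have R1: "rcomp T (sp_Dbar G) w True = (\<Sum>j\<le>N. sp_scale (rcomp_coeff1 w j)
   (sp_mult (T (w + 2 * of_nat j) True) ((sp_dx ^^ j) (sp_sigma (sp_Dbar G)))))"
    by (rule rcomp_par1_upto) (use sdeg_Dbar N_def in auto)
  show ?thesis
    unfolding R1 unfolding rcompD_apply not_False_eq_True not_True_eq_False rcomp_par1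
       rcomp_par0 sdeg_sigma N_def[symmetric]
    by (simp only: sum.distrib[symmetric] A)
qed

lemma rcomp_rcompD: "rcomp (rcompD T) G = rcomp T (sp_Dbar G) + rcompD (rcomp T (sp_sigma G))"
proof (intro ext)
  fix w q show "rcomp (rcompD T) G w q = (rcomp T (sp_Dbar G) + rcompD (rcomp T (sp_sigma G))) w q"
    unfolding plus_fun_apply by (cases q) (simp_all only: rcomp_rcompD_par0 rcomp_rcompD_par1)
qed

lemma rcomp_uminus_right: "rcomp T (- G) = - rcomp T G"
proof (intro ext)
  fix w q show "rcomp T (- G) w q = (- rcomp T G) w q"
  proof (cases q)
    case True
    have "rcomp T (- G) w True = (\<Sum>j\<le>sdeg G. - sp_scale (rcomp_coeff1 w j)
      (sp_mult (T (w + 2 * of_nat j) True) ((sp_dx ^^ j) (sp_sigma G))))"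
      unfolding rcomp_par1 sdeg_minus
      by (rule sum.cong) (simp_all add: sp_dx_pow_minus sp_sigma_minus sp_mult_minus_right sp_scale_minus)
    then show ?thesis using True by (simp add: sum_negf rcomp_par1)
  next
    case False
    have "rcomp T (- G) w False = (\<Sum>j\<le>sdeg G. - sp_scale (rcomp_coeff0 w j)
   (sp_mult (T (w + 2 * of_nat j) False) ((sp_dx ^^ j) G)
    + sp_mult (T (w + 1 + 2 * of_nat j) True) ((sp_dx ^^ j) (sp_Dbar G))))"
      unfolding rcomp_par0 sdeg_minus
      by (rule sum.cong) (simp_all add: sp_dx_pow_minus sp_Dbar_minus sp_mult_minus_right sp_scale_minus sp_scale_add sp_scale_diff)
    then show ?thesis using False by (simp add: sum_negf rcomp_par0)
  qed
qed

section \<open>Composition with \<open>Dbar\<close> intertwines the \<open>\<K>\<close>-actions\<close>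

text \<open>Scalar multiplication by \<open>1/2\<close> is rewritten as multiplication by the constant polynomial
  \<open>half_pc\<close>, so that the method \<open>algebra\<close> can treat it as a ring element with \<open>half_pc + half_pc = 1\<close>.\<close>

definition half_pc :: "complex poly" where "half_pc = [:1/2:]"
lemma smult_half: "smult (1/2) p = half_pc * p" by (simp add: half_pc_def)
lemma pderiv_half_pc[simp]: "pderiv half_pc = 0" by (simp add: half_pc_def pderiv_pCons)
lemma half_pc_add_half_pc: "half_pc + half_pc = 1" by (simp add: half_pc_def one_pCons)

lemma Lop_lcompD_even:
  "Lop (1/2) (f,0) (lcompD T) = lcompD (Lop 0 (f,0) T)"
  unfolding Lop_def
  by (intro ext) (simp add: prod_eq_iff pderiv_arith smult_add_right smult_diff_right smult_half,
      intro conjI; (algebra | use half_pc_add_half_pc in algebra))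

lemma Lop_lcompD_odd:
  "Lop (1/2) (0,f) (lcompD T) = - lcompD (Lop 0 (0,f) T)"
  unfolding Lop_def
  by (intro ext) (simp add: prod_eq_iff pderiv_arith smult_add_right smult_diff_right smult_half,
      intro conjI; (algebra | use half_pc_add_half_pc in algebra))

lemma Lop_uminus: "Lop mu (- F) T = - Lop mu F T"
  unfolding Lop_def by (intro ext) (simp add: sp_mult_minus_left sp_D_minus sp_dx_minus sp_scale_minus)
lemma Rop_uminus: "Rop mu (- F) T = - Rop mu F T"
  unfolding Rop_def by (simp add: sp_D_minus sp_dx_minus rcomp_uminus_right rcompD_minus sscale_minus)

lemma Rop_lcompD: "Rop lam G (lcompD U) = lcompD (Rop lam G U)"
  unfolding Rop_def by (simp add: lcompD_add lcompD_diff lcompD_minus lcompD_sscale lcompD_rcompD lcompD_rcomp)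

lemma act_lcompD: "act lam (1/2) F (lcompD T) = lcompD (act lam 0 (sp_sigma F) T)"
proof -
  obtain f g where F: "F = (f, g)" by (cases F)
  have n: "(0::complex poly, - g) = - (0, g)" by simp
  show ?thesis
    unfolding act_def F Let_def
    by (simp add: sp_sigma_def n Lop_uminus Rop_uminus Lop_lcompD_even Lop_lcompD_odd Rop_lcompD
        sev_lcompD sod_lcompD lcompD_add lcompD_diff lcompD_minus del: uminus_Pair)
qed

lemma Lop_rcompD: "Lop mu F (rcompD T) = rcompD (Lop mu F T)"
  unfolding Lop_def by (intro ext) simp

lemma Rop_rcompD_even: "Rop 0 (f,0) (rcompD T) = rcompD (Rop (1/2) (f,0) T)"
proof -
  have a: "sp_Dbar (f,0) = - sp_D (f,0)" "sp_sigma (f,0) = (f,0)" "sp_Dbar (sp_D (f,0)) = sp_dx (f,0)"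
     "sp_sigma (sp_D (f,0)) = - sp_D (f,0)" by (simp_all add: prod_eq_iff)
  show ?thesis
    unfolding Rop_def rcomp_rcompD a rcomp_uminus_right
    using half_pc_add_half_pc by (intro ext) (simp add: prod_eq_iff smult_add_right smult_diff_right smult_half mult_2[symmetric])
qed

lemma Rop_rcompD_odd: "Rop 0 (0,g) (rcompD T) = - rcompD (Rop (1/2) (0,g) T)"
proof -
  have a: "sp_Dbar (0,g) = sp_D (0,g)" "sp_sigma (0,g) = - (0,g)" "sp_Dbar (sp_D (0,g)) = - sp_dx (0,g)"
     "sp_sigma (sp_D (0,g)) = sp_D (0,g)" by (simp_all add: prod_eq_iff)
  show ?thesis
    unfolding Rop_def rcomp_rcompD a rcomp_uminus_right
    using half_pc_add_half_pc by (intro ext) (simp add: prod_eq_iff smult_add_right smult_diff_right smult_half mult_2[symmetric])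
qed

lemma act_rcompD: "act 0 mu F (rcompD T) = rcompD (act (1/2) mu F T)"
proof -
  obtain f g where F: "F = (f, g)" by (cases F)
  show ?thesis
    unfolding act_def F Let_def
    by (simp add: Lop_rcompD Rop_rcompD_even Rop_rcompD_odd sev_rcompD sod_rcompD
        rcompD_add rcompD_diff rcompD_minus)
qed

definition symb_supp :: "(complex \<times> bool) set \<Rightarrow> symb set" where
  "symb_supp X = {T. \<forall>z q. T z q \<noteq> 0 \<longrightarrow> (z, q) \<in> X}"

lemma symb_suppI: "(\<And>z q. T z q \<noteq> 0 \<Longrightarrow> (z, q) \<in> X) \<Longrightarrow> T \<in> symb_supp X"
  unfolding symb_supp_def by blast

lemma symb_suppD: "T \<in> symb_supp X \<Longrightarrow> T z q \<noteq> 0 \<Longrightarrow> (z, q) \<in> X"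
  unfolding symb_supp_def by blast

lemma symb_supp_pointwise:
  assumes "T \<in> symb_supp X" "\<And>z q. T z q = 0 \<Longrightarrow> S z q = 0"
  shows "S \<in> symb_supp X"
  using assms unfolding symb_supp_def by blast

lemma symb_supp_zero: "0 \<in> symb_supp X"
  by (rule symb_suppI) simp

lemma symb_supp_add:
  assumes "A \<in> symb_supp X" "B \<in> symb_supp X"
  shows "A + B \<in> symb_supp X"
proof (rule symb_suppI)
  fix z q assume "(A + B) z q \<noteq> 0"
  then have "A z q \<noteq> 0 \<or> B z q \<noteq> 0" by auto
  then show "(z, q) \<in> X" using assms by (auto dest: symb_suppD)
qed

lemma symb_supp_uminus: "A \<in> symb_supp X \<Longrightarrow> - A \<in> symb_supp X"
  by (erule symb_supp_pointwise) simp

lemma symb_supp_diff: "A \<in> symb_supp X \<Longrightarrow> B \<in> symb_supp X \<Longrightarrow> A - B \<in> symb_supp X"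
  by (metis symb_supp_add symb_supp_uminus diff_conv_add_uminus)

lemma symb_supp_sscale: "A \<in> symb_supp X \<Longrightarrow> sscale c A \<in> symb_supp X"
  by (erule symb_supp_pointwise) simp

lemma symb_supp_lmult: "A \<in> symb_supp X \<Longrightarrow> lmult G A \<in> symb_supp X"
  by (erule symb_supp_pointwise) simp

lemma symb_supp_sev: "A \<in> symb_supp X \<Longrightarrow> sev A \<in> symb_supp X"
  by (erule symb_supp_pointwise, rename_tac z q, case_tac q) (simp_all add: sev_apply zero_prod_def)

lemma symb_supp_sod: "A \<in> symb_supp X \<Longrightarrow> sod A \<in> symb_supp X"
  by (erule symb_supp_pointwise, rename_tac z q, case_tac q) (simp_all add: sod_apply zero_prod_def)

lemma symb_supp_mono: "A \<in> symb_supp X \<Longrightarrow> X \<subseteq> Y \<Longrightarrow> A \<in> symb_supp Y"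
  unfolding symb_supp_def by blast

definition Psi_supp :: "complex \<Rightarrow> bool \<Rightarrow> (complex \<times> bool) set" where
  "Psi_supp k p = {(2 * k - of_nat j, p \<noteq> odd j) | j. True}"

lemma Psi_eq_symb_supp: "Psi k p = symb_supp (Psi_supp k p)"
  unfolding Psi_def symb_supp_def Psi_supp_def by blast

lemma PsiI: "(\<And>z q. T z q \<noteq> 0 \<Longrightarrow> \<exists>j::nat. z = 2 * k - of_nat j \<and> q = (p \<noteq> odd j)) \<Longrightarrow> T \<in> Psi k p"
  unfolding Psi_def by blast

lemma PsiD: "T \<in> Psi k p \<Longrightarrow> T z q \<noteq> 0 \<Longrightarrow> \<exists>j::nat. z = 2 * k - of_nat j \<and> q = (p \<noteq> odd j)"
  unfolding Psi_def by blast

lemmas Psi_zero = symb_supp_zero[of "Psi_supp k p" for k p, folded Psi_eq_symb_supp]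
lemmas Psi_add = symb_supp_add[of _ "Psi_supp k p" for k p, folded Psi_eq_symb_supp]
lemmas Psi_uminus = symb_supp_uminus[of _ "Psi_supp k p" for k p, folded Psi_eq_symb_supp]
lemmas Psi_diff = symb_supp_diff[of _ "Psi_supp k p" for k p, folded Psi_eq_symb_supp]
lemmas Psi_sscale = symb_supp_sscale[of _ "Psi_supp k p" for k p, folded Psi_eq_symb_supp]
lemmas Psi_lmult = symb_supp_lmult[of _ "Psi_supp k p" for k p, folded Psi_eq_symb_supp]
lemmas Psi_sev = symb_supp_sev[of _ "Psi_supp k p" for k p, folded Psi_eq_symb_supp]
lemmas Psi_sod = symb_supp_sod[of _ "Psi_supp k p" for k p, folded Psi_eq_symb_supp]

section \<open>The \<open>\<K>\<close>-action preserves \<open>\<Psi>^(k,p)\<close>\<close>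

lemma Psi_raise_half: "A \<in> Psi k p \<Longrightarrow> A \<in> Psi (k + 1/2) (\<not> p)"
proof (rule PsiI)
  fix z q assume "A \<in> Psi k p" "A z q \<noteq> 0"
  then obtain j where "z = 2 * k - of_nat j" "q = (p \<noteq> odd j)" by (metis PsiD)
  then show "\<exists>j::nat. z = 2 * (k + 1/2) - of_nat j \<and> q = ((\<not> p) \<noteq> odd j)"
    by (intro exI[of _ "Suc j"]) (simp add: algebra_simps)
qed

lemma Psi_lcompD: "A \<in> Psi k p \<Longrightarrow> lcompD A \<in> Psi (k + 1/2) (\<not> p)"
proof (rule PsiI)
  fix z q assume A: "A \<in> Psi k p" and "lcompD A z q \<noteq> 0"
  then have "A z q \<noteq> 0 \<or> A (z - 1) (\<not> q) \<noteq> 0" by auto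
  then show "\<exists>j::nat. z = 2 * (k + 1/2) - of_nat j \<and> q = ((\<not> p) \<noteq> odd j)"
  proof
    assume "A z q \<noteq> 0"
    then obtain j where "z = 2 * k - of_nat j" "q = (p \<noteq> odd j)" using PsiD[OF A] by blast
    then show ?thesis by (intro exI[of _ "Suc j"]) (simp add: algebra_simps)
  next
    assume "A (z - 1) (\<not> q) \<noteq> 0"
    then obtain j where "z - 1 = 2 * k - of_nat j" "(\<not> q) = (p \<noteq> odd j)" using PsiD[OF A] by blast
    then show ?thesis by (intro exI[of _ "j"]) (auto simp add: algebra_simps)
  qed
qed

lemma Psi_rcompD: "A \<in> Psi k p \<Longrightarrow> rcompD A \<in> Psi (k + 1/2) (\<not> p)"
proof (rule PsiI)
  fix z q assume A: "A \<in> Psi k p" and "rcompD A z q \<noteq> 0"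
  then have "A (z - 1) (\<not> q) \<noteq> 0" by auto
  then obtain j where "z - 1 = 2 * k - of_nat j" "(\<not> q) = (p \<noteq> odd j)" using PsiD[OF A] by blast
  then show "\<exists>j::nat. z = 2 * (k + 1/2) - of_nat j \<and> q = ((\<not> p) \<noteq> odd j)"
    by (intro exI[of _ "j"]) (auto simp add: algebra_simps)
qed

lemma sp_scale_neq_0D: "sp_scale c a \<noteq> 0 \<Longrightarrow> a \<noteq> 0" by auto
lemma sp_mult_neq_0D: "sp_mult a b \<noteq> 0 \<Longrightarrow> a \<noteq> 0" by auto

lemma Psi_rcomp: "A \<in> Psi k p \<Longrightarrow> rcomp A G \<in> Psi k p"
proof (rule PsiI)
  fix w r assume A: "A \<in> Psi k p" and nz: "rcomp A G w r \<noteq> 0"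
  show "\<exists>j::nat. w = 2 * k - of_nat j \<and> r = (p \<noteq> odd j)"
  proof (cases r)
    case True
    with nz have "(\<Sum>j\<le>sdeg G. sp_scale (rcomp_coeff1 w j)
   (sp_mult (A (w + 2 * of_nat j) True) ((sp_dx ^^ j) (sp_sigma G)))) \<noteq> 0" by (simp add: rcomp_par1)
    then obtain j where "sp_scale (rcomp_coeff1 w j)
   (sp_mult (A (w + 2 * of_nat j) True) ((sp_dx ^^ j) (sp_sigma G))) \<noteq> 0" by (blast elim: sum.not_neutral_contains_not_neutral)
    then have "A (w + 2 * of_nat j) True \<noteq> 0" by (blast dest: sp_scale_neq_0D sp_mult_neq_0D)
    then obtain i where "w + 2 * of_nat j = 2 * k - of_nat i" "True = (p \<noteq> odd i)" using PsiD[OF A] by blast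
    then show ?thesis using True by (intro exI[of _ "i + 2 * j"]) (simp add: algebra_simps)
  next
    case False
    with nz have "(\<Sum>j\<le>sdeg G. sp_scale (rcomp_coeff0 w j)
   (sp_mult (A (w + 2 * of_nat j) False) ((sp_dx ^^ j) G)
    + sp_mult (A (w + 1 + 2 * of_nat j) True) ((sp_dx ^^ j) (sp_Dbar G)))) \<noteq> 0" by (simp add: rcomp_par0)
    then obtain j where "sp_scale (rcomp_coeff0 w j) (sp_mult (A (w + 2 * of_nat j) False) ((sp_dx ^^ j) G)
    + sp_mult (A (w + 1 + 2 * of_nat j) True) ((sp_dx ^^ j) (sp_Dbar G))) \<noteq> 0" by (blast elim: sum.not_neutral_contains_not_neutral)
    then have "sp_mult (A (w + 2 * of_nat j) False) ((sp_dx ^^ j) G)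
    + sp_mult (A (w + 1 + 2 * of_nat j) True) ((sp_dx ^^ j) (sp_Dbar G)) \<noteq> 0" by (blast dest: sp_scale_neq_0D)
    then have "A (w + 2 * of_nat j) False \<noteq> 0 \<or> A (w + 1 + 2 * of_nat j) True \<noteq> 0" by auto
    then show ?thesis
    proof
      assume "A (w + 2 * of_nat j) False \<noteq> 0"
      then obtain i where "w + 2 * of_nat j = 2 * k - of_nat i" "False = (p \<noteq> odd i)" using PsiD[OF A] by blast
      then show ?thesis using False by (intro exI[of _ "i + 2 * j"]) (simp add: algebra_simps)
    next
      assume "A (w + 1 + 2 * of_nat j) True \<noteq> 0"
      then obtain i where "w + 1 + 2 * of_nat j = 2 * k - of_nat i" "True = (p \<noteq> odd i)" using PsiD[OF A] by blast
      then show ?thesis using False by (intro exI[of _ "i + 1 + 2 * j"]) (simp add: algebra_simps)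
    qed
  qed
qed

lemma Lop_eq_lmult: "Lop nu F T = lmult F (- lcompD (lcompD T)) + sscale (1/2) (lmult (sp_D F) (lcompD T)) + sscale nu (lmult (sp_dx F) T)"
  unfolding Lop_def by (intro ext) simp

lemma add_half_half: "k + 1/2 + 1/2 = k + (1::complex)" by simp

lemma Psi_raise: "A \<in> Psi k p \<Longrightarrow> A \<in> Psi (k + 1) p"
  using Psi_raise_half[OF Psi_raise_half[of A k p]] by (simp add: add_half_half)
lemma Psi_lcompD2: "A \<in> Psi k p \<Longrightarrow> lcompD (lcompD A) \<in> Psi (k + 1) p"
  using Psi_lcompD[OF Psi_lcompD[of A k p]] by (simp add: add_half_half)
lemma Psi_rcompD2: "A \<in> Psi k p \<Longrightarrow> rcompD (rcompD A) \<in> Psi (k + 1) p"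
  using Psi_rcompD[OF Psi_rcompD[of A k p]] by (simp add: add_half_half)
lemma Psi_lcompD1: "A \<in> Psi k p \<Longrightarrow> lcompD A \<in> Psi (k + 1) p"
  using Psi_raise_half[OF Psi_lcompD[of A k p]] by (simp add: add_half_half)
lemma Psi_rcompD1: "A \<in> Psi k p \<Longrightarrow> rcompD A \<in> Psi (k + 1) p"
  using Psi_raise_half[OF Psi_rcompD[of A k p]] by (simp add: add_half_half)

lemma Psi_Lop: "A \<in> Psi k p \<Longrightarrow> Lop nu F A \<in> Psi (k + 1) p"
  unfolding Lop_eq_lmult
  by (intro Psi_add Psi_sscale Psi_lmult Psi_uminus Psi_lcompD2 Psi_lcompD1 Psi_raise)
lemma Psi_Rop: "A \<in> Psi k p \<Longrightarrow> Rop nu F A \<in> Psi (k + 1) p"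
  unfolding Rop_def
  by (intro Psi_add Psi_sscale Psi_uminus Psi_rcompD2 Psi_rcompD1 Psi_raise Psi_rcomp)
lemma Psi_act_up: "A \<in> Psi k p \<Longrightarrow> act lam mu F A \<in> Psi (k + 1) p"
  unfolding act_def Let_def
  by (intro Psi_add Psi_diff Psi_Lop Psi_Rop Psi_sev Psi_sod)

lemma Psi_lower:
  assumes A: "A \<in> Psi (k + 1) p" and z1: "A (2 * k + 2) p = 0" and z2: "A (2 * k + 1) (\<not> p) = 0"
  shows "A \<in> Psi k p"
proof (rule PsiI)
  fix z q assume nz: "A z q \<noteq> 0"
  then obtain j where j: "z = 2 * (k + 1) - of_nat j" "q = (p \<noteq> odd j)" using PsiD[OF A] by blast
  show "\<exists>j::nat. z = 2 * k - of_nat j \<and> q = (p \<noteq> odd j)"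
  proof (cases j)
    case 0 then show ?thesis using nz z1 j by (simp add: algebra_simps)
  next
    case (Suc i) note i = this
    show ?thesis
    proof (cases i)
      case 0 then show ?thesis using nz z2 j i by (simp add: algebra_simps)
    next
      case (Suc l) then show ?thesis using j i by (intro exI[of _ l]) (simp add: algebra_simps)
    qed
  qed
qed

lemma Psi_coeff_above: assumes A: "A \<in> Psi k p" shows "A (2 * k + of_nat (Suc n)) q = 0"
proof (rule ccontr)
  assume "A (2 * k + of_nat (Suc n)) q \<noteq> 0"
  then obtain j where "2 * k + of_nat (Suc n) = 2 * k - of_nat j" using PsiD[OF A] by blast
  then have "of_nat (Suc n + j) = (0::complex)" by (simp add: algebra_simps)
  then show False by (simp only: of_nat_eq_0_iff)
qed
lemma Psi_coeff_above1: "A \<in> Psi k p \<Longrightarrow> A (2 * k + 1) q = 0" using Psi_coeff_above[of A k p 0] by simp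
lemma Psi_coeff_above2: "A \<in> Psi k p \<Longrightarrow> A (2 * k + 2) q = 0" using Psi_coeff_above[of A k p 1] by simp
lemma Psi_coeff_top_parity: assumes A: "A \<in> Psi k p" shows "A (2 * k) (\<not> p) = 0"
proof (rule ccontr)
  assume "A (2 * k) (\<not> p) \<noteq> 0"
  then obtain j where "2 * k = 2 * k - of_nat j" "(\<not> p) = (p \<noteq> odd j)" using PsiD[OF A] by blast
  then show False by simp
qed
text \<open>Near the top order of \<open>A\<close> only the term \<open>j = 0\<close> of the sums defining \<open>rcomp\<close> survives.\<close>

lemma rcomp_top_sum:
  assumes A: "A \<in> Psi k p" and w: "w = 2 * k - 1 + of_nat m"
  and f0: "\<And>j. f j = g (A (w + 2 * of_nat j) False) (A (w + 1 + 2 * of_nat j) True) (A (w + 2 * of_nat j) True) j"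
  and g0: "\<And>j. g 0 0 0 j = 0"
  shows "(\<Sum>j\<le>N. f j) = f 0"
proof -
  have "(\<Sum>j\<le>N. f j) = (\<Sum>j\<le>0. f j)"
  proof (rule sum_atMost_extend)
    fix j :: nat assume "0 < j"
    then obtain i where i: "j = Suc i" by (cases j) auto
    have e1: "w + 2 * of_nat j = 2 * k + of_nat (Suc (m + 2 * i))" unfolding w i by (simp add: algebra_simps)
    have e2: "w + 1 + 2 * of_nat j = 2 * k + of_nat (Suc (Suc (m + 2 * i)))" unfolding w i by (simp add: algebra_simps)
    show "f j = 0" unfolding f0 e1 e2 Psi_coeff_above[OF A] g0 by simp
  qed simp
  then show ?thesis by simp
qed

lemma rcomp_top_par0:
  assumes A: "A \<in> Psi k p" and w: "w = 2 * k - 1 + of_nat m"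
  shows "rcomp A G w False = sp_mult (A w False) G + sp_mult (A (w + 1) True) (sp_Dbar G)"
  unfolding rcomp_par0
  by (subst rcomp_top_sum[OF A w, where g = "\<lambda>x y z j. sp_scale (rcomp_coeff0 w j) (sp_mult x ((sp_dx ^^ j) G) + sp_mult y ((sp_dx ^^ j) (sp_Dbar G)))"])
     (simp_all add: rcomp_coeff0_def)

lemma rcomp_top_par1:
  assumes A: "A \<in> Psi k p" and w: "w = 2 * k - 1 + of_nat m"
  shows "rcomp A G w True = sp_mult (A w True) (sp_sigma G)"
  unfolding rcomp_par1
  by (subst rcomp_top_sum[OF A w, where g = "\<lambda>x y z j. sp_scale (rcomp_coeff1 w j) (sp_mult z ((sp_dx ^^ j) (sp_sigma G)))"])
     (simp_all add: rcomp_coeff1_def)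

lemma rcomp_top:
  assumes A: "A \<in> Psi k p" and w: "w \<in> {2 * k - 1, 2 * k, 2 * k + 1, 2 * k + 2}"
  shows "rcomp A G w False = sp_mult (A w False) G + sp_mult (A (w + 1) True) (sp_Dbar G)"
    "rcomp A G w True = sp_mult (A w True) (sp_sigma G)"
proof -
  from w have "\<exists>m :: nat. w = 2 * k - 1 + of_nat m"
  proof (elim insertE)
    assume "w = 2 * k - 1" then show ?thesis by (intro exI[of _ 0]) simp
  next
    assume "w = 2 * k" then show ?thesis by (intro exI[of _ 1]) simp
  next
    assume "w = 2 * k + 1" then show ?thesis by (intro exI[of _ 2]) simp
  next
    assume "w = 2 * k + 2" then show ?thesis by (intro exI[of _ 3]) simp
  qed simp
  then obtain m :: nat where "w = 2 * k - 1 + of_nat m" by blast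
  then show "rcomp A G w False = sp_mult (A w False) G + sp_mult (A (w + 1) True) (sp_Dbar G)"
    "rcomp A G w True = sp_mult (A w True) (sp_sigma G)"
    using rcomp_top_par0[OF A] rcomp_top_par1[OF A] by blast+
qed

text \<open>The two top coefficients of \<open>act lam mu F A\<close> cancel, because composing with the leading
  parts \<open>F \<partial>_x\<close> and \<open>D(F) Dbar / 2\<close> of \<open>L(X_F)\<close> on the left or on the right agrees to top order.\<close>

lemma act_top_coeffs:
  assumes A: "A \<in> Psi k p"
  shows "act lam mu F A (2 * k + 2) p = 0" "act lam mu F A (2 * k + 1) (\<not> p) = 0"
proof -
  obtain f g where F: "F = (f, g)" by (cases F)
  have As: "sev A \<in> Psi k p" "sod A \<in> Psi k p" using A by (simp_all add: Psi_sev Psi_sod)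
  have e: "2 * k + 2 - 1 = 2 * k + 1" "2 * k + 1 - 1 = 2 * k" "2 * k - 1 + 1 = 2 * k" "2 * k + 1 + 1 = 2 * k + 2"
    by simp_all
  have h3: "X \<in> Psi k p \<Longrightarrow> X (2 * k + 2 + 1) q = 0 \<and> X (3 + 2 * k) q = 0" for X q
    using Psi_coeff_above[of X k p 2 q] by (simp add: algebra_simps)
  note z = Psi_coeff_above1[OF A] Psi_coeff_above2[OF A] h3[OF A] Psi_coeff_above1[OF As(1)] Psi_coeff_above2[OF As(1)] h3[OF As(1)]
    Psi_coeff_above1[OF As(2)] Psi_coeff_above2[OF As(2)] h3[OF As(2)] Psi_coeff_top_parity[OF A] Psi_coeff_top_parity[OF As(1)] Psi_coeff_top_parity[OF As(2)]
  note r = rcomp_top[OF A] rcomp_top[OF As(1)] rcomp_top[OF As(2)]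
  show "act lam mu F A (2 * k + 2) p = 0"
    unfolding act_def Let_def Lop_def Rop_def F
    using half_pc_add_half_pc by (cases p) (simp_all add: e z r prod_eq_iff pderiv_arith smult_half mult_2[symmetric] sev_apply sod_apply)
  show "act lam mu F A (2 * k + 1) (\<not> p) = 0"
    unfolding act_def Let_def Lop_def Rop_def F
    using half_pc_add_half_pc
    by (cases p) (simp_all add: e z r prod_eq_iff pderiv_arith smult_half mult_2[symmetric] sev_apply sod_apply,
        algebra)
qed

lemma Psi_act: "A \<in> Psi k p \<Longrightarrow> act lam mu F A \<in> Psi k p"
  by (rule Psi_lower[OF Psi_act_up]) (simp_all add: act_top_coeffs)

text \<open>\<open>Dop_upto N\<close> is the space \<open>D^(N/2)\<close> of differential operators of order at most \<open>N/2\<close>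
  (lemma \<open>Dop_le_eq_Dop_upto\<close>); the natural-number index avoids half-integers.\<close>

definition Dop_upto :: "nat \<Rightarrow> symb set" where
  "Dop_upto N = symb_supp {(of_nat j, odd j) | j. j \<le> N}"

lemma Dop_uptoI: "(\<And>z q. T z q \<noteq> 0 \<Longrightarrow> \<exists>j\<le>N. z = of_nat j \<and> q = odd j) \<Longrightarrow> T \<in> Dop_upto N"
  unfolding Dop_upto_def symb_supp_def by blast

lemma Dop_uptoD: "T \<in> Dop_upto N \<Longrightarrow> T z q \<noteq> 0 \<Longrightarrow> \<exists>j\<le>N. z = of_nat j \<and> q = odd j"
  unfolding Dop_upto_def symb_supp_def by blast

lemmas Dop_upto_zero = symb_supp_zero[of "{(of_nat j, odd j) | j. j \<le> N}" for N, folded Dop_upto_def]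
lemmas Dop_upto_add = symb_supp_add[of _ "{(of_nat j, odd j) | j. j \<le> N}" for N, folded Dop_upto_def]
lemmas Dop_upto_uminus = symb_supp_uminus[of _ "{(of_nat j, odd j) | j. j \<le> N}" for N, folded Dop_upto_def]
lemmas Dop_upto_diff = symb_supp_diff[of _ "{(of_nat j, odd j) | j. j \<le> N}" for N, folded Dop_upto_def]
lemmas Dop_upto_sscale = symb_supp_sscale[of _ "{(of_nat j, odd j) | j. j \<le> N}" for N, folded Dop_upto_def]
lemmas Dop_upto_lmult = symb_supp_lmult[of _ "{(of_nat j, odd j) | j. j \<le> N}" for N, folded Dop_upto_def]
lemmas Dop_upto_sev = symb_supp_sev[of _ "{(of_nat j, odd j) | j. j \<le> N}" for N, folded Dop_upto_def]
lemmas Dop_upto_sod = symb_supp_sod[of _ "{(of_nat j, odd j) | j. j \<le> N}" for N, folded Dop_upto_def]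

lemma Dop_upto_mono: "A \<in> Dop_upto N \<Longrightarrow> N \<le> M \<Longrightarrow> A \<in> Dop_upto M"
  unfolding Dop_upto_def by (erule symb_supp_mono) auto

lemma Dop_upto_lcompD: assumes A: "A \<in> Dop_upto N" shows "lcompD A \<in> Dop_upto (Suc N)"
proof (rule Dop_uptoI)
  fix z q assume "lcompD A z q \<noteq> 0"
  then have "A z q \<noteq> 0 \<or> A (z - 1) (\<not> q) \<noteq> 0" by auto
  then show "\<exists>j\<le>Suc N. z = of_nat j \<and> q = odd j"
  proof
    assume "A z q \<noteq> 0"
    then obtain j where "j \<le> N" "z = of_nat j" "q = odd j" using Dop_uptoD[OF A] by blast
    then show ?thesis by (intro exI[of _ j]) simp
  next
    assume "A (z - 1) (\<not> q) \<noteq> 0"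
    then obtain j where "j \<le> N" "z - 1 = of_nat j" "(\<not> q) = odd j" using Dop_uptoD[OF A] by blast
    then show ?thesis by (intro exI[of _ "Suc j"]) (auto simp add: algebra_simps)
  qed
qed

lemma Dop_upto_rcompD: assumes A: "A \<in> Dop_upto N" shows "rcompD A \<in> Dop_upto (Suc N)"
proof (rule Dop_uptoI)
  fix z q assume "rcompD A z q \<noteq> 0"
  then have "A (z - 1) (\<not> q) \<noteq> 0" by auto
  then obtain j where "j \<le> N" "z - 1 = of_nat j" "(\<not> q) = odd j" using Dop_uptoD[OF A] by blast
  then show "\<exists>j\<le>Suc N. z = of_nat j \<and> q = odd j" by (intro exI[of _ "Suc j"]) (auto simp add: algebra_simps)
qed

lemma gbinomial_of_nat_nonzero_le: "(of_nat m gchoose j :: complex) \<noteq> 0 \<Longrightarrow> j \<le> m"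
  by (metis binomial_eq_0 not_le of_nat_0 binomial_gbinomial)

lemma Dop_upto_rcomp: assumes A: "A \<in> Dop_upto N" shows "rcomp A G \<in> Dop_upto N"
proof (rule Dop_uptoI)
  fix w r assume nz: "rcomp A G w r \<noteq> 0"
  show "\<exists>j\<le>N. w = of_nat j \<and> r = odd j"
  proof (cases r)
    case True
    with nz have "(\<Sum>j\<le>sdeg G. sp_scale (rcomp_coeff1 w j)
   (sp_mult (A (w + 2 * of_nat j) True) ((sp_dx ^^ j) (sp_sigma G)))) \<noteq> 0" by (simp add: rcomp_par1)
    then obtain j where "sp_scale (rcomp_coeff1 w j)
   (sp_mult (A (w + 2 * of_nat j) True) ((sp_dx ^^ j) (sp_sigma G))) \<noteq> 0" by (blast elim: sum.not_neutral_contains_not_neutral)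
    then have c: "rcomp_coeff1 w j \<noteq> 0" and a: "A (w + 2 * of_nat j) True \<noteq> 0" by (auto dest: sp_mult_neq_0D)
    from a obtain n where n: "n \<le> N" "w + 2 * of_nat j = of_nat n" "odd n" using Dop_uptoD[OF A] by blast
    then obtain m where m: "n = Suc (2 * m)" by (metis oddE Suc_eq_plus1)
    have "(w + 2 * of_nat j - 1) / 2 = of_nat m" using n(2) m by (simp add: field_simps)
    then have "j \<le> m" using c unfolding rcomp_coeff1_def by (auto dest: gbinomial_of_nat_nonzero_le)
    then have "w = of_nat (n - 2 * j)" using n(2) m by (simp add: of_nat_diff algebra_simps)
    then show ?thesis using True n m \<open>j \<le> m\<close> by (intro exI[of _ "n - 2 * j"]) auto
  next
    case False
    with nz have "(\<Sum>j\<le>sdeg G. sp_scale (rcomp_coeff0 w j)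
   (sp_mult (A (w + 2 * of_nat j) False) ((sp_dx ^^ j) G)
    + sp_mult (A (w + 1 + 2 * of_nat j) True) ((sp_dx ^^ j) (sp_Dbar G)))) \<noteq> 0" by (simp add: rcomp_par0)
    then obtain j where s: "sp_scale (rcomp_coeff0 w j) (sp_mult (A (w + 2 * of_nat j) False) ((sp_dx ^^ j) G)
    + sp_mult (A (w + 1 + 2 * of_nat j) True) ((sp_dx ^^ j) (sp_Dbar G))) \<noteq> 0" by (blast elim: sum.not_neutral_contains_not_neutral)
    then have c: "rcomp_coeff0 w j \<noteq> 0" by auto
    from s have "A (w + 2 * of_nat j) False \<noteq> 0 \<or> A (w + 1 + 2 * of_nat j) True \<noteq> 0" by auto
    then show ?thesis
    proof
      assume a: "A (w + 2 * of_nat j) False \<noteq> 0"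
      then obtain n where n: "n \<le> N" "w + 2 * of_nat j = of_nat n" "\<not> odd n" using Dop_uptoD[OF A] by blast
      then obtain m where m: "n = 2 * m" by (metis evenE)
      have "(w + 2 * of_nat j) / 2 = of_nat m" using n(2) m by (simp add: field_simps)
      then have "j \<le> m" using c unfolding rcomp_coeff0_def by (auto dest: gbinomial_of_nat_nonzero_le)
      then have "w = of_nat (n - 2 * j)" using n(2) m by (simp add: of_nat_diff algebra_simps)
      then show ?thesis using False n m \<open>j \<le> m\<close> by (intro exI[of _ "n - 2 * j"]) auto
    next
      assume a: "A (w + 1 + 2 * of_nat j) True \<noteq> 0"
      then obtain n where n: "n \<le> N" "w + 1 + 2 * of_nat j = of_nat n" "odd n" using Dop_uptoD[OF A] by blast
      then obtain m where m: "n = Suc (2 * m)" by (metis oddE Suc_eq_plus1)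
      have "(w + 2 * of_nat j) / 2 = of_nat m" using n(2) m by (simp add: field_simps)
      then have "j \<le> m" using c unfolding rcomp_coeff0_def by (auto dest: gbinomial_of_nat_nonzero_le)
      then have "w = of_nat (2 * m - 2 * j)" using n(2) m by (simp add: of_nat_diff algebra_simps)
      then show ?thesis using False n m \<open>j \<le> m\<close> by (intro exI[of _ "2 * m - 2 * j"]) auto
    qed
  qed
qed

lemma Dop_upto_Psi: assumes A: "A \<in> Dop_upto N" shows "A \<in> Psi (of_nat N / 2) (odd N)"
proof (rule PsiI)
  fix z q assume "A z q \<noteq> 0"
  then obtain j where j: "j \<le> N" "z = of_nat j" "q = odd j" using Dop_uptoD[OF A] by blast
  then show "\<exists>i::nat. z = 2 * (of_nat N / 2) - of_nat i \<and> q = (odd N \<noteq> odd i)"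
    by (intro exI[of _ "N - j"]) (auto simp add: of_nat_diff)
qed

lemma Psi_Dop_upto: assumes A: "A \<in> Psi (of_nat N / 2) (odd N)" and B: "A \<in> Dop_upto M" shows "A \<in> Dop_upto N"
proof (rule Dop_uptoI)
  fix z q assume nz: "A z q \<noteq> 0"
  obtain j where j: "j \<le> M" "z = of_nat j" "q = odd j" using Dop_uptoD[OF B nz] by blast
  obtain i where i: "z = 2 * (of_nat N / 2) - of_nat i" using PsiD[OF A nz] by blast
  have "of_nat (j + i) = (of_nat N :: complex)" using i j by simp
  then have "j + i = N" by (simp only: of_nat_eq_iff)
  then show "\<exists>j\<le>N. z = of_nat j \<and> q = odd j" using j by auto
qed

lemma Dop_upto_Lop: "A \<in> Dop_upto N \<Longrightarrow> Lop nu F A \<in> Dop_upto (Suc (Suc N))"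
proof -
  assume A: "A \<in> Dop_upto N"
  have a: "lcompD A \<in> Dop_upto (Suc (Suc N))" by (rule Dop_upto_mono[OF Dop_upto_lcompD[OF A]]) simp
  have b: "A \<in> Dop_upto (Suc (Suc N))" by (rule Dop_upto_mono[OF A]) simp
  show ?thesis unfolding Lop_eq_lmult
    by (intro Dop_upto_add Dop_upto_sscale Dop_upto_lmult Dop_upto_uminus Dop_upto_lcompD A a b)
qed
lemma Dop_upto_Rop: "A \<in> Dop_upto N \<Longrightarrow> Rop nu F A \<in> Dop_upto (Suc (Suc N))"
proof -
  assume A: "A \<in> Dop_upto N"
  have a: "rcompD (rcomp A G) \<in> Dop_upto (Suc (Suc N))" for G by (rule Dop_upto_mono[OF Dop_upto_rcompD[OF Dop_upto_rcomp[OF A]]]) simp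
  have b: "rcomp A G \<in> Dop_upto (Suc (Suc N))" for G by (rule Dop_upto_mono[OF Dop_upto_rcomp[OF A]]) simp
  show ?thesis unfolding Rop_def
    by (intro Dop_upto_add Dop_upto_sscale Dop_upto_uminus Dop_upto_rcompD Dop_upto_rcomp A a b)
qed

lemma Dop_upto_act: assumes A: "A \<in> Dop_upto N" shows "act lam mu F A \<in> Dop_upto N"
proof -
  have "act lam mu F A \<in> Dop_upto (Suc (Suc N))"
    unfolding act_def Let_def
    by (intro Dop_upto_add Dop_upto_diff Dop_upto_Lop Dop_upto_Rop Dop_upto_sev Dop_upto_sod A)
  moreover have "act lam mu F A \<in> Psi (of_nat N / 2) (odd N)"
    by (rule Psi_act[OF Dop_upto_Psi[OF A]])
  ultimately show ?thesis by (rule Psi_Dop_upto[rotated])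
qed

lemma Dop_iff_Dop_upto: "T \<in> Dop \<longleftrightarrow> (\<exists>N. T \<in> Dop_upto N)"
proof
  assume T: "T \<in> Dop"
  let ?J = "{j::nat. \<exists>q. T (of_nat j) q \<noteq> 0}"
  have fin: "finite {z. \<exists>q. T z q \<noteq> 0}" using T unfolding Dop_def by blast
  have "of_nat ` ?J \<subseteq> {z. \<exists>q. T z q \<noteq> 0}" by auto
  then have "finite (of_nat ` ?J :: complex set)" using fin by (rule finite_subset)
  then have "finite ?J" by (rule finite_imageD) (simp add: inj_on_def)
  then obtain N where N: "\<forall>j\<in>?J. j \<le> N" using finite_nat_set_iff_bounded_le by blast
  have "T \<in> Dop_upto N"
  proof (rule Dop_uptoI)
    fix z q assume nz: "T z q \<noteq> 0"
    then obtain j :: nat where j: "z = of_nat j" "q = odd j" using T unfolding Dop_def by blast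
    then have "j \<in> ?J" using nz by auto
    then show "\<exists>j\<le>N. z = of_nat j \<and> q = odd j" using N j by blast
  qed
  then show "\<exists>N. T \<in> Dop_upto N" by blast
next
  assume "\<exists>N. T \<in> Dop_upto N"
  then obtain N where T: "T \<in> Dop_upto N" by blast
  have "{z. \<exists>q. T z q \<noteq> 0} \<subseteq> of_nat ` {..N}" using Dop_uptoD[OF T] by blast
  then have "finite {z. \<exists>q. T z q \<noteq> 0}" by (rule finite_subset) simp
  moreover have "\<forall>z q. T z q \<noteq> 0 \<longrightarrow> (\<exists>j::nat. z = of_nat j \<and> q = odd j)" using Dop_uptoD[OF T] by blast
  ultimately show "T \<in> Dop" unfolding Dop_def by blast
qed

lemma Dop_upto_Dop: "T \<in> Dop_upto N \<Longrightarrow> T \<in> Dop" using Dop_iff_Dop_upto by blast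

lemma Dop_le_eq_Dop_upto: "Dop_le (real N / 2) = Dop_upto N"
proof (intro set_eqI iffI)
  fix T assume "T \<in> Dop_le (real N / 2)"
  then have T: "T \<in> Dop" and R: "\<And>z q. T z q \<noteq> 0 \<Longrightarrow> Re z \<le> real N" unfolding Dop_le_def by auto
  show "T \<in> Dop_upto N"
  proof (rule Dop_uptoI)
    fix z q assume nz: "T z q \<noteq> 0"
    then obtain j :: nat where j: "z = of_nat j" "q = odd j" using T unfolding Dop_def by blast
    then have "j \<le> N" using R[OF nz] by simp
    then show "\<exists>j\<le>N. z = of_nat j \<and> q = odd j" using j by blast
  qed
next
  fix T assume T: "T \<in> Dop_upto N"
  then have "T \<in> Dop" by (rule Dop_upto_Dop)
  moreover have "Re z \<le> 2 * (real N / 2)" if "T z q \<noteq> 0" for z q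
    using Dop_uptoD[OF T that] by auto
  ultimately show "T \<in> Dop_le (real N / 2)" unfolding Dop_le_def by blast
qed

lemma Dop_le_0: "Dop_le 0 = Dop_upto 0" using Dop_le_eq_Dop_upto[of 0] by simp
lemma Dop_le_half: "Dop_le (1/2) = Dop_upto 1" using Dop_le_eq_Dop_upto[of 1] by simp

section \<open>Complements in the differential operators\<close>

lemma Dop_upto_coeff_above: assumes T: "T \<in> Dop_upto N" and n: "N < n" shows "T (of_nat n) q = 0"
proof (rule ccontr)
  assume "T (of_nat n) q \<noteq> 0"
  then obtain j where "j \<le> N" "of_nat n = (of_nat j :: complex)" using Dop_uptoD[OF T] by blast
  then have "j \<le> N" "n = j" by (simp_all only: of_nat_eq_iff)
  then show False using n by simp
qed

lemma Dop_upto_coeff_vanish_of_lcompD: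
  assumes T: "T \<in> Dop_upto N" and L: "lcompD T \<in> Dop_upto M" and n: "M \<le> n"
  shows "T (of_nat n) q = 0"
proof -
  have "\<And>m q. Suc N - m = k \<Longrightarrow> M \<le> m \<Longrightarrow> T (of_nat m) q = 0" for k
  proof (induct k)
    case 0 then show ?case by (intro Dop_upto_coeff_above[OF T]) simp
  next
    case (Suc k)
    then have IH: "T (of_nat (Suc m)) q' = 0" for q' by (intro Suc.hyps) simp_all
    have "lcompD T (of_nat (Suc m)) (\<not> q) = 0" by (rule Dop_upto_coeff_above[OF L]) (use Suc in simp)
    then have "sp_sigma (T (of_nat m) q) = 0" using IH by simp
    then show ?case by (rule sp_sigma_eq_0D)
  qed
  then show ?thesis using n by blast
qed

lemma Dop_lcompD_Dop_upto_0_eq_0: assumes T: "T \<in> Dop_upto N" and L: "lcompD T \<in> Dop_upto 0" shows "T = 0"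
proof (intro ext)
  fix z q show "T z q = 0 z q"
  proof (rule ccontr)
    assume nz: "T z q \<noteq> 0 z q"
    then obtain j where "z = of_nat j" using Dop_uptoD[OF T] by fastforce
    then show False using nz Dop_upto_coeff_vanish_of_lcompD[OF T L, of j q] by simp
  qed
qed

lemma Dop_upto_of_lcompD: assumes T: "T \<in> Dop_upto N" and L: "lcompD T \<in> Dop_upto (Suc M)" shows "T \<in> Dop_upto M"
proof (rule Dop_uptoI)
  fix z q assume nz: "T z q \<noteq> 0"
  then obtain j where j: "z = of_nat j" "q = odd j" using Dop_uptoD[OF T] by blast
  have "j \<le> M"
  proof (rule ccontr)
    assume "\<not> j \<le> M" then have "Suc M \<le> j" by simp
    then show False using nz j Dop_upto_coeff_vanish_of_lcompD[OF T L, of j q] by simp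
  qed
  then show "\<exists>j\<le>M. z = of_nat j \<and> q = odd j" using j by blast
qed

lemma Dop_upto_split_lcompD: "S \<in> Dop_upto N \<Longrightarrow> \<exists>T\<in>Dop_upto N. S - lcompD T \<in> Dop_upto 0"
proof (induct N arbitrary: S)
  case 0 then show ?case by (intro bexI[of _ 0]) (simp_all add: Dop_upto_zero)
next
  case (Suc N)
  define T1 where "T1 = (\<lambda>(z::complex) q. if z = of_nat N \<and> q = odd N then sp_sigma (S (of_nat (Suc N)) (odd (Suc N))) else 0)"
  have T1: "T1 \<in> Dop_upto N" by (rule Dop_uptoI) (auto simp: T1_def split: if_splits)
  have "S - lcompD T1 \<in> Dop_upto (Suc N)"
    by (intro Dop_upto_diff Suc.prems Dop_upto_lcompD T1)
  have S': "S - lcompD T1 \<in> Dop_upto N"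
  proof (rule Dop_uptoI)
    fix z q assume nz: "(S - lcompD T1) z q \<noteq> 0"
    then obtain j where j: "j \<le> Suc N" "z = of_nat j" "q = odd j"
      using Dop_uptoD[OF \<open>S - lcompD T1 \<in> Dop_upto (Suc N)\<close>] by blast
    have "j \<noteq> Suc N"
    proof
      assume e: "j = Suc N"
      have "T1 (of_nat (Suc N)) (odd (Suc N)) = 0" by (simp add: T1_def)
      moreover have "T1 (of_nat (Suc N) - 1) (\<not> odd (Suc N)) = sp_sigma (S (of_nat (Suc N)) (odd (Suc N)))"
        by (simp add: T1_def)
      ultimately have "(S - lcompD T1) (of_nat (Suc N)) (odd (Suc N)) = 0" by simp
      then show False using nz j e by simp
    qed
    then show "\<exists>j\<le>N. z = of_nat j \<and> q = odd j" using j by auto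
  qed
  obtain T2 where T2: "T2 \<in> Dop_upto N" "S - lcompD T1 - lcompD T2 \<in> Dop_upto 0" using Suc.hyps[OF S'] by blast
  show ?case
  proof (intro bexI[of _ "T1 + T2"])
    show "S - lcompD (T1 + T2) \<in> Dop_upto 0" using T2(2) by (simp add: lcompD_add algebra_simps)
    show "T1 + T2 \<in> Dop_upto (Suc N)" by (intro Dop_upto_add Dop_upto_mono[OF T1] Dop_upto_mono[OF T2(1)]) simp_all
  qed
qed

lemma Dop_upto_split_rcompD: assumes S: "S \<in> Dop_upto N" shows "\<exists>T\<in>Dop_upto N. S - rcompD T \<in> Dop_upto 0"
proof -
  define T where "T = (\<lambda>z q. if z = -1 then 0 else S (z + 1) (\<not> q))"
  have T: "T \<in> Dop_upto N"
  proof (rule Dop_uptoI)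
    fix z q assume nz: "T z q \<noteq> 0"
    then have z: "z \<noteq> -1" and s: "S (z + 1) (\<not> q) \<noteq> 0" by (auto simp: T_def split: if_splits)
    obtain j where j: "j \<le> N" "z + 1 = of_nat j" "(\<not> q) = odd j" using Dop_uptoD[OF S s] by blast
    have "j \<noteq> 0"
    proof
      assume "j = 0" with j(2) have "z = -1" by (simp add: eq_neg_iff_add_eq_0)
      with z show False by simp
    qed
    then obtain i where i: "j = Suc i" by (cases j) auto
    show "\<exists>j\<le>N. z = of_nat j \<and> q = odd j" using j i by (intro exI[of _ i]) (auto simp: algebra_simps)
  qed
  have "S - rcompD T \<in> Dop_upto 0"
  proof (rule Dop_uptoI)
    fix z q assume nz: "(S - rcompD T) z q \<noteq> 0"
    then have "z = 0" by (auto simp: T_def split: if_splits)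
    then show "\<exists>j\<le>0. z = of_nat j \<and> q = odd j" using nz Dop_uptoD[OF S, of z q] by (auto simp: T_def)
  qed
  then show ?thesis using T by blast
qed

lemma Dop_upto_split_lcompD_rcompD:
  assumes S: "S \<in> Dop_upto N"
  shows "\<exists>T\<in>Dop_upto N. S - lcompD (rcompD T) \<in> Dop_upto 1"
proof -
  obtain T1 where T1: "T1 \<in> Dop_upto N" "S - lcompD T1 \<in> Dop_upto 0"
    using Dop_upto_split_lcompD[OF S] by blast
  obtain T2 where T2: "T2 \<in> Dop_upto N" "T1 - rcompD T2 \<in> Dop_upto 0"
    using Dop_upto_split_rcompD[OF T1(1)] by blast
  have "S - lcompD (rcompD T2) = (S - lcompD T1) + lcompD (T1 - rcompD T2)"
    by (simp add: lcompD_diff)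
  also have "\<dots> \<in> Dop_upto 1"
    using Dop_upto_mono[OF T1(2)] Dop_upto_lcompD[OF T2(2)] by (intro Dop_upto_add) simp_all
  finally show ?thesis using T2(1) by blast
qed

lemma Dop_rcompD_Dop_upto_0_eq_0: assumes T: "T \<in> Dop_upto N" and R: "rcompD T \<in> Dop_upto 0" shows "T = 0"
proof (intro ext)
  fix z q show "T z q = 0 z q"
  proof (rule ccontr)
    assume nz: "T z q \<noteq> 0 z q"
    then obtain j where j: "z = of_nat j" using Dop_uptoD[OF T] by fastforce
    have "rcompD T (z + 1) (\<not> q) \<noteq> 0" using nz by simp
    then obtain i where "i \<le> (0::nat)" "z + 1 = of_nat i" using Dop_uptoD[OF R] by blast
    moreover have "of_nat (Suc j) \<noteq> (0::complex)" by (simp only: of_nat_eq_0_iff)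
    ultimately show False using j by (simp add: add.commute)
  qed
qed

section \<open>Complements in the symbol space \<open>\<Psi>^(-1/2,1)\<close>\<close>

lemma Psi_lower_half:
  assumes X: "X \<in> Psi (k + 1/2) (\<not> p)" and z: "X (2 * k + 1) (\<not> p) = 0"
  shows "X \<in> Psi k p"
proof (rule PsiI)
  fix w q assume nz: "X w q \<noteq> 0"
  then obtain j where j: "w = 2 * (k + 1/2) - of_nat j" "q = ((\<not> p) \<noteq> odd j)" using PsiD[OF X] by blast
  show "\<exists>j::nat. w = 2 * k - of_nat j \<and> q = (p \<noteq> odd j)"
  proof (cases j)
    case 0 then show ?thesis using nz z j by (simp add: algebra_simps)
  next
    case (Suc i) then show ?thesis using j by (intro exI[of _ i]) (auto simp add: algebra_simps)
  qed
qed

lemma Psi_lower_neg1: "X \<in> Psi (-1/2) True \<Longrightarrow> X (-1) True = 0 \<Longrightarrow> X \<in> Psi (-1) False"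
  using Psi_lower_half[of X "-1" False] by simp

lemma Psi_lower_neg3half: "X \<in> Psi (-1) False \<Longrightarrow> X (-2) False = 0 \<Longrightarrow> X \<in> Psi (-3/2) True"
  using Psi_lower_half[of X "-3/2" True] by simp

lemma Psi_neg1_raise: "X \<in> Psi (-1) False \<Longrightarrow> X \<in> Psi (-1/2) True"
  using Psi_raise_half[of X "-1" False] by simp

lemma Psi_neg3half_raise: "X \<in> Psi (-3/2) True \<Longrightarrow> X \<in> Psi (-1) False"
  using Psi_raise_half[of X "-3/2" True] by simp

lemma Psi_neg_half_raise: "X \<in> Psi (-1/2) True \<Longrightarrow> X \<in> Psi 0 False"
  using Psi_raise_half[of X "-1/2" True] by simp

lemma Psi_neg3half_rcompD: "X \<in> Psi (-3/2) True \<Longrightarrow> rcompD X \<in> Psi (-1) False"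
  using Psi_rcompD[of X "-3/2" True] by simp

lemma of_nat_neq_neg: "(of_nat i :: complex) \<noteq> - 1 - of_nat j"
proof
  assume "(of_nat i :: complex) = - 1 - of_nat j"
  then have "of_nat (i + Suc j) = (0::complex)" by (simp add: algebra_simps)
  then show False by (simp only: of_nat_eq_0_iff)
qed

lemma neg1_minus_of_nat_eq_iff: "(-1 - of_nat i :: complex) = -1 - of_nat j \<longleftrightarrow> i = j"
  by simp

lemma Psi_neg1_coeff_eq:
  assumes "U \<in> Psi (-1) False" "U z q \<noteq> 0"
  obtains j where "z = -1 - of_nat (Suc j)"
proof -
  obtain i where "z = 2 * (-1) - of_nat i" using PsiD[OF assms] by blast
  then have "z = -1 - of_nat (Suc i)" by (simp add: of_nat_Suc)
  then show ?thesis by (rule that)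
qed

text \<open>By induction on \<open>j\<close>, \<open>U\<close> vanishes at \<open>z = -1 - j\<close>: for \<open>j = 0\<close> because \<open>U \<in> \<Psi>^(-1,0)\<close>, and in
  the step because the coefficient of \<open>Dbar \<circ> U\<close> at the negative index \<open>z = -1 - j\<close> is zero.\<close>

lemma Psi_lcompD_Dop_upto_eq_0:
  assumes U: "U \<in> Psi (-1) False" and L: "lcompD U \<in> Dop_upto M"
  shows "U = 0"
proof -
  have Z: "U (-1 - of_nat j) q = 0" for j q
  proof (induct j arbitrary: q)
    case 0
    show ?case
    proof (rule ccontr)
      assume "U (-1 - of_nat 0) q \<noteq> 0"
      then obtain i where "(-1 - of_nat 0 :: complex) = -1 - of_nat (Suc i)" by (rule Psi_neg1_coeff_eq[OF U])
      then show False by (simp only: neg1_minus_of_nat_eq_iff)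
    qed
  next
    case (Suc j)
    have "lcompD U (-1 - of_nat j) (\<not> q) = 0"
      using Dop_uptoD[OF L] of_nat_neq_neg by metis
    moreover have "(-1 - of_nat j - 1 :: complex) = -1 - of_nat (Suc j)" by (simp add: algebra_simps)
    ultimately have "sp_sigma (U (-1 - of_nat (Suc j)) q) = 0" using Suc[of "\<not> q"] by simp
    then show ?case by (rule sp_sigma_eq_0D)
  qed
  show ?thesis
  proof (intro ext)
    fix z q show "U z q = 0 z q"
    proof (cases "U z q = 0")
      case False
      then obtain j where z: "z = -1 - of_nat (Suc j)" by (rule Psi_neg1_coeff_eq[OF U])
      show ?thesis unfolding z Z by simp
    qed simp
  qed
qed

lemma Psi_rcompD_Dop_upto_eq_0:
  assumes T: "T \<in> Psi (-1) False" and R: "rcompD T \<in> Dop_upto M"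
  shows "T = 0"
proof (intro ext)
  fix z q show "T z q = 0 z q"
  proof (rule ccontr)
    assume nz: "T z q \<noteq> 0 z q"
    then obtain j where j: "z = -1 - of_nat (Suc j)" using Psi_neg1_coeff_eq[OF T] by auto
    have "rcompD T (z + 1) (\<not> q) \<noteq> 0" using nz by simp
    then obtain i where "z + 1 = of_nat i" using Dop_uptoD[OF R] by blast
    then show False using j of_nat_neq_neg[of i j] by (simp add: algebra_simps)
  qed
qed

lemma rcompD_eq_0_iff: "rcompD T = 0 \<longleftrightarrow> T = 0"
proof
  assume R: "rcompD T = 0"
  show "T = 0"
  proof (intro ext)
    fix z q
    have "T z q = rcompD T (z + 1) (\<not> q)" by simp
    then show "T z q = 0 z q" using R by simp
  qed
qed simp

text \<open>The symbol \<open>s Dbar^(-1)_1 + \<Sum>j\<ge>1 u_j Dbar^(-1-j)\<close> with \<open>u_0 = s\<close> and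
  \<open>u_(j+1) = - \<sigma>(Dbar u_j)\<close>: this recursion makes all terms of negative order of
  \<open>Dbar \<circ> dbar_inv_symb s\<close> cancel.\<close>

definition dbar_inv_coeff :: "spoly \<Rightarrow> nat \<Rightarrow> spoly" where
  "dbar_inv_coeff s j = ((\<lambda>x. - sp_sigma (sp_Dbar x)) ^^ j) s"

definition dbar_inv_symb :: "spoly \<Rightarrow> symb" where
  "dbar_inv_symb s = (\<lambda>z q. if (\<exists>j::nat. z = -1 - of_nat j \<and> q = even j) then dbar_inv_coeff s (THE j::nat. z = -1 - of_nat j) else 0)"

lemma the_neg_nat: "(THE i::nat. (-1 - of_nat j :: complex) = -1 - of_nat i) = j"
  by (rule the_equality) simp_all

lemma dbar_inv_symb_at: "dbar_inv_symb s (-1 - of_nat j) (even j) = dbar_inv_coeff s j"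
  unfolding dbar_inv_symb_def by (auto simp: the_neg_nat)
lemma dbar_inv_symb_off: "\<not> (\<exists>j::nat. z = -1 - of_nat j \<and> q = even j) \<Longrightarrow> dbar_inv_symb s z q = 0"
  unfolding dbar_inv_symb_def by auto
lemma dbar_inv_symb_top: "dbar_inv_symb s (-1) True = s"
  using dbar_inv_symb_at[of s 0] by (simp add: dbar_inv_coeff_def)

lemma dbar_inv_symb_Psi: "dbar_inv_symb s \<in> Psi (-1/2) True"
proof (rule PsiI)
  fix z q assume "dbar_inv_symb s z q \<noteq> 0"
  then obtain j :: nat where "z = -1 - of_nat j" "q = even j" using dbar_inv_symb_off by blast
  then show "\<exists>j::nat. z = 2 * (-1/2) - of_nat j \<and> q = (True \<noteq> odd j)" by auto
qed

lemma lcompD_dbar_inv_symb: "lcompD (dbar_inv_symb s) \<in> Dop_upto 0"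
proof (rule Dop_uptoI)
  fix z q assume nz: "lcompD (dbar_inv_symb s) z q \<noteq> 0"
  show "\<exists>j\<le>0. z = of_nat j \<and> q = odd j"
  proof (cases "\<exists>j::nat. z = -1 - of_nat j \<and> q = even j")
    case True
    then obtain j :: nat where j: "z = -1 - of_nat j" "q = even j" by blast
    have e: "z - 1 = -1 - of_nat (Suc j)" "(\<not> q) = even (Suc j)" unfolding j by (simp_all add: algebra_simps)
    have "lcompD (dbar_inv_symb s) z q = sp_Dbar (dbar_inv_coeff s j) + sp_sigma (dbar_inv_coeff s (Suc j))"
      unfolding lcompD_apply e using dbar_inv_symb_at[of s j] dbar_inv_symb_at[of s "Suc j"] j(1) e(2) j(2) by simp
    also have "\<dots> = 0" by (simp add: dbar_inv_coeff_def sp_sigma_minus)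
    finally show ?thesis using nz by simp
  next
    case False
    then have "dbar_inv_symb s z q = 0" by (rule dbar_inv_symb_off)
    then have "dbar_inv_symb s (z - 1) (\<not> q) \<noteq> 0" using nz by auto
    then obtain j :: nat where j: "z - 1 = -1 - of_nat j" "(\<not> q) = even j" using dbar_inv_symb_off by blast
    show ?thesis
    proof (cases j)
      case 0 then show ?thesis using j by simp
    next
      case (Suc i)
      have "z = (z - 1) + 1" by simp
      also have "\<dots> = -1 - of_nat i" unfolding j(1) Suc by (simp add: algebra_simps)
      finally have "z = -1 - of_nat i \<and> q = even i" using j(2) Suc by simp
      then show ?thesis using False by blast
    qed
  qed
qed

lemma Psi_split_lcompD:
  assumes S: "S \<in> Psi (-1/2) True"
  shows "\<exists>b\<in>Psi (-1/2) True. lcompD b \<in> Dop_upto 0 \<and> S - b \<in> Psi (-1) False"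
proof -
  let ?b = "dbar_inv_symb (S (-1) True)"
  have "S - ?b \<in> Psi (-1) False"
    by (rule Psi_lower_neg1[OF Psi_diff[OF S dbar_inv_symb_Psi]]) (simp add: dbar_inv_symb_top)
  then show ?thesis using dbar_inv_symb_Psi lcompD_dbar_inv_symb by blast
qed

lemma Psi_split_rcompD:
  assumes S: "S \<in> Psi (-1/2) True"
  shows "\<exists>b\<in>Psi (-1/2) True. rcompD b \<in> Dop_upto 0 \<and> S - b \<in> Psi (-1) False"
proof -
  define b where "b = (\<lambda>(z::complex) q. if z = -1 \<and> q then S (-1) True else 0)"
  have "b \<in> Psi (-1/2) True"
    by (rule PsiI) (auto simp: b_def split: if_splits intro: exI[of _ 0])
  moreover have "rcompD b \<in> Dop_upto 0"
    by (rule Dop_uptoI) (auto simp: b_def split: if_splits)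
  moreover have "S - b \<in> Psi (-1) False"
    by (rule Psi_lower_neg1[OF Psi_diff[OF S \<open>b \<in> Psi (-1/2) True\<close>]]) (simp add: b_def)
  ultimately show ?thesis by blast
qed

text \<open>The correction \<open>b\<close> removes the two top coefficients \<open>s0\<close> (order \<open>-1/2\<close>) and \<open>s1\<close> (order \<open>-1\<close>)
  of \<open>S\<close>; it is \<open>U \<circ> Dbar^(-1)\<close> with \<open>U = s0 + dbar_inv_symb s1\<close>, so that \<open>Dbar \<circ> b \<circ> Dbar = Dbar \<circ> U\<close>
  has order at most \<open>1/2\<close>.\<close>

lemma Psi_split_lcompD_rcompD:
  assumes S: "S \<in> Psi (-1/2) True"
  shows "\<exists>b\<in>Psi (-1/2) True. lcompD (rcompD b) \<in> Dop_upto 1 \<and> S - b \<in> Psi (-3/2) True"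
proof -
  define s0 where "s0 = S (-1) True"
  define s1 where "s1 = S (-2) False"
  define d where "d = (\<lambda>(z::complex) q. if z = 0 \<and> \<not> q then s0 else 0)"
  define U where "U = dbar_inv_symb s1 + d"
  define b where "b = (\<lambda>z q. U (z + 1) (\<not> q))"
  have dD: "d \<in> Dop_upto 0" by (rule Dop_uptoI) (auto simp: d_def split: if_splits)
  have dP: "d \<in> Psi 0 False" by (rule PsiI) (auto simp: d_def split: if_splits)
  have UP: "U \<in> Psi 0 False" unfolding U_def by (intro Psi_add Psi_neg_half_raise dbar_inv_symb_Psi dP)
  have rb: "rcompD b = U" unfolding b_def by (intro ext) simp
  have ld: "lcompD d \<in> Dop_upto 1" using Dop_upto_lcompD[OF dD] by simp
  have lU: "lcompD U \<in> Dop_upto 1" unfolding U_def lcompD_add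
    by (intro Dop_upto_add Dop_upto_mono[OF lcompD_dbar_inv_symb] ld) simp
  have bP: "b \<in> Psi (-1/2) True"
  proof (rule PsiI)
    fix z q assume "b z q \<noteq> 0"
    then have "U (z + 1) (\<not> q) \<noteq> 0" by (simp add: b_def)
    then obtain j where j: "z + 1 = 2 * 0 - of_nat j" "(\<not> q) = (False \<noteq> odd j)" using PsiD[OF UP] by blast
    have "z = (z + 1) - 1" by simp
    also have "\<dots> = 2 * (-1/2) - of_nat j" unfolding j(1) by simp
    finally show "\<exists>j::nat. z = 2 * (-1/2) - of_nat j \<and> q = (True \<noteq> odd j)" using j(2) by auto
  qed
  have B0: "dbar_inv_symb s1 0 False = 0"
    by (rule dbar_inv_symb_off) (use of_nat_neq_neg[of 0] in auto)
  have B1: "dbar_inv_symb s1 (-2) True = 0"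
  proof (rule dbar_inv_symb_off)
    show "\<not> (\<exists>j::nat. (-2::complex) = -1 - of_nat j \<and> True = even j)"
    proof
      assume "\<exists>j::nat. (-2::complex) = -1 - of_nat j \<and> True = even j"
      then obtain j :: nat where "(-2::complex) = -1 - of_nat j" "even j" by blast
      then have "of_nat j = (of_nat 1 :: complex)" by (simp add: algebra_simps)
      then have "j = 1" by (simp only: of_nat_eq_iff)
      then show False using \<open>even j\<close> by simp
    qed
  qed
  have "S - b \<in> Psi (-1) False"
    by (rule Psi_lower_neg1[OF Psi_diff[OF S bP]]) (simp add: b_def U_def d_def s0_def B0)
  then have "S - b \<in> Psi (-3/2) True"
    by (rule Psi_lower_neg3half) (simp add: b_def U_def d_def s1_def dbar_inv_symb_top)
  then show ?thesis using bP lU rb by auto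
qed

lemma KsubI:
  "0 \<in> S \<Longrightarrow> (\<And>a b. a \<in> S \<Longrightarrow> b \<in> S \<Longrightarrow> a + b \<in> S) \<Longrightarrow> (\<And>c a. a \<in> S \<Longrightarrow> sscale c a \<in> S)
    \<Longrightarrow> (\<And>F a. a \<in> S \<Longrightarrow> act lam mu F a \<in> S) \<Longrightarrow> Ksub lam mu S"
  unfolding Ksub_def by blast

lemma Ksub_zero: "Ksub lam mu S \<Longrightarrow> 0 \<in> S"
  unfolding Ksub_def by blast

lemma Ksub_add: "Ksub lam mu S \<Longrightarrow> a \<in> S \<Longrightarrow> b \<in> S \<Longrightarrow> a + b \<in> S"
  unfolding Ksub_def by blast

lemma Ksub_sscale: "Ksub lam mu S \<Longrightarrow> a \<in> S \<Longrightarrow> sscale c a \<in> S"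
  unfolding Ksub_def by blast

lemma Ksub_act: "Ksub lam mu S \<Longrightarrow> a \<in> S \<Longrightarrow> act lam mu F a \<in> S"
  unfolding Ksub_def by blast

lemma Dop_add: "x \<in> Dop \<Longrightarrow> y \<in> Dop \<Longrightarrow> x + y \<in> Dop"
proof -
  assume "x \<in> Dop" "y \<in> Dop"
  then obtain N M where "x \<in> Dop_upto N" "y \<in> Dop_upto M" using Dop_iff_Dop_upto by blast
  then have "x \<in> Dop_upto (N + M)" "y \<in> Dop_upto (N + M)" by (auto elim: Dop_upto_mono)
  then show ?thesis using Dop_iff_Dop_upto Dop_upto_add by blast
qed

lemma Dop_zero: "0 \<in> Dop" using Dop_iff_Dop_upto Dop_upto_zero by blast
lemma Dop_sscale: "x \<in> Dop \<Longrightarrow> sscale c x \<in> Dop" using Dop_iff_Dop_upto Dop_upto_sscale by blast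
lemma Dop_act: "x \<in> Dop \<Longrightarrow> act lam mu F x \<in> Dop" using Dop_iff_Dop_upto Dop_upto_act by blast
lemma Dop_lcompD: "x \<in> Dop \<Longrightarrow> lcompD x \<in> Dop" using Dop_iff_Dop_upto Dop_upto_lcompD by blast
lemma Dop_rcompD: "x \<in> Dop \<Longrightarrow> rcompD x \<in> Dop" using Dop_iff_Dop_upto Dop_upto_rcompD by blast

lemma Ksub_Dop: "Ksub lam mu Dop"
  by (intro KsubI Dop_zero Dop_add Dop_sscale Dop_act)

lemma Ksub_Dop_upto: "Ksub lam mu (Dop_upto N)"
  by (intro KsubI Dop_upto_zero Dop_upto_add Dop_upto_sscale Dop_upto_act)

lemma Ksub_Psi: "Ksub lam mu (Psi k p)"
  by (intro KsubI Psi_zero Psi_add Psi_sscale Psi_act)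

lemma additive_imp_zero:
  fixes f :: "'a::monoid_add \<Rightarrow> 'b::cancel_comm_monoid_add"
  assumes "\<And>x y. f (x + y) = f x + f y"
  shows "f 0 = 0"
  using assms[of 0 0] by simp

lemma Ksub_image:
  assumes V: "Ksub lam' mu' V"
    and add: "\<And>x y. f (x + y) = f x + f y"
    and scale: "\<And>c x. f (sscale c x) = sscale c (f x)"
    and intertw: "\<And>F x. \<exists>G. act lam mu F (f x) = f (act lam' mu' G x)"
  shows "Ksub lam mu (f ` V)"
proof (rule KsubI)
  show "0 \<in> f ` V" using Ksub_zero[OF V] additive_imp_zero[of f, OF add] by (metis image_eqI)
next
  fix a b assume "a \<in> f ` V" "b \<in> f ` V"
  then show "a + b \<in> f ` V" using Ksub_add[OF V] by (auto simp: add[symmetric])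
next
  fix c a assume "a \<in> f ` V"
  then show "sscale c a \<in> f ` V" using Ksub_sscale[OF V] by (auto simp: scale[symmetric])
next
  fix F a assume "a \<in> f ` V"
  then obtain x where x: "x \<in> V" "a = f x" by blast
  obtain G where "act lam mu F (f x) = f (act lam' mu' G x)" using intertw by blast
  then show "act lam mu F a \<in> f ` V" using Ksub_act[OF V x(1)] x(2) by auto
qed

lemma Ksub_preimage:
  assumes V: "Ksub lam mu V" and W: "Ksub lam' mu' W"
    and add: "\<And>x y. f (x + y) = f x + f y"
    and scale: "\<And>c x. f (sscale c x) = sscale c (f x)"
    and intertw: "\<And>F x. \<exists>G. f (act lam mu F x) = act lam' mu' G (f x)"
  shows "Ksub lam mu {x \<in> V. f x \<in> W}"
proof (rule KsubI)
  show "0 \<in> {x \<in> V. f x \<in> W}" using Ksub_zero[OF V] Ksub_zero[OF W] additive_imp_zero[of f, OF add] by simp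
next
  fix F a assume a: "a \<in> {x \<in> V. f x \<in> W}"
  obtain G where "f (act lam mu F a) = act lam' mu' G (f a)" using intertw by blast
  then show "act lam mu F a \<in> {x \<in> V. f x \<in> W}" using a Ksub_act[OF V] Ksub_act[OF W] by auto
qed (use Ksub_add[OF V] Ksub_add[OF W] Ksub_sscale[OF V] Ksub_sscale[OF W] in \<open>auto simp: add scale\<close>)

lemma KdirectI:
  assumes A: "Ksub lam mu A" and B: "Ksub lam mu B" and AB: "A \<inter> B \<subseteq> {0}"
    and sum: "\<And>a b. a \<in> A \<Longrightarrow> b \<in> B \<Longrightarrow> a + b \<in> V"
    and split: "\<And>S. S \<in> V \<Longrightarrow> \<exists>b\<in>B. S - b \<in> A"
  shows "Kdirect lam mu V A B"
proof -
  have "V = {a + b | a b. a \<in> A \<and> b \<in> B}"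
  proof (intro set_eqI iffI)
    fix S assume "S \<in> V"
    then obtain b where "b \<in> B" "S - b \<in> A" using split by blast
    moreover have "S = (S - b) + b" by simp
    ultimately show "S \<in> {a + b | a b. a \<in> A \<and> b \<in> B}" by blast
  qed (use sum in blast)
  moreover have "A \<inter> B = {0}" using Ksub_zero[OF A] Ksub_zero[OF B] AB by blast
  ultimately show ?thesis using A B unfolding Kdirect_def by blast
qed

lemma Kdirect_Dop_image:
  assumes add: "\<And>x y. f (x + y) = f x + f y"
    and scale: "\<And>c x. f (sscale c x) = sscale c (f x)"
    and intertw: "\<And>F x. \<exists>G. act lam mu F (f x) = f (act lam' mu' G x)"
    and Dop_f: "\<And>T. T \<in> Dop \<Longrightarrow> f T \<in> Dop"
    and inj: "\<And>T. T \<in> Dop \<Longrightarrow> f T \<in> Dop_upto n \<Longrightarrow> T = 0"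
    and split: "\<And>S. S \<in> Dop \<Longrightarrow> \<exists>T\<in>Dop. S - f T \<in> Dop_upto n"
  shows "Kdirect lam mu Dop (Dop_upto n) (f ` Dop)"
proof (rule KdirectI)
  show "Ksub lam mu (Dop_upto n)" by (rule Ksub_Dop_upto)
  show "Ksub lam mu (f ` Dop)" by (rule Ksub_image[OF Ksub_Dop add scale intertw])
  show "Dop_upto n \<inter> f ` Dop \<subseteq> {0}" using inj additive_imp_zero[of f, OF add] by auto
  show "a + b \<in> Dop" if "a \<in> Dop_upto n" "b \<in> f ` Dop" for a b
    using that Dop_f by (auto intro: Dop_add Dop_upto_Dop)
  show "\<exists>b\<in>f ` Dop. S - b \<in> Dop_upto n" if "S \<in> Dop" for S using split[OF that] by blast
qed

lemma Kdirect_Psi_preimage: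
  assumes add: "\<And>x y. f (x + y) = f x + f y"
    and scale: "\<And>c x. f (sscale c x) = sscale c (f x)"
    and intertw: "\<And>F x. \<exists>G. f (act lam mu F x) = act lam' mu' G (f x)"
    and sub: "Psi k p \<subseteq> Psi k0 p0"
    and inj: "\<And>T. T \<in> Psi k p \<Longrightarrow> f T \<in> Dop_upto n \<Longrightarrow> T = 0"
    and split: "\<And>S. S \<in> Psi k0 p0 \<Longrightarrow> \<exists>b\<in>Psi k0 p0. f b \<in> Dop_upto n \<and> S - b \<in> Psi k p"
  shows "Kdirect lam mu (Psi k0 p0) (Psi k p) {T \<in> Psi k0 p0. f T \<in> Dop_upto n}"
proof (rule KdirectI)
  show "Ksub lam mu (Psi k p)" by (rule Ksub_Psi)
  show "Ksub lam mu {T \<in> Psi k0 p0. f T \<in> Dop_upto n}"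
    by (rule Ksub_preimage[OF Ksub_Psi Ksub_Dop_upto add scale intertw])
  show "Psi k p \<inter> {T \<in> Psi k0 p0. f T \<in> Dop_upto n} \<subseteq> {0}" using inj by blast
  show "a + b \<in> Psi k0 p0" if "a \<in> Psi k p" "b \<in> {T \<in> Psi k0 p0. f T \<in> Dop_upto n}" for a b
    using that sub by (auto intro: Psi_add)
  show "\<exists>b\<in>{T \<in> Psi k0 p0. f T \<in> Dop_upto n}. S - b \<in> Psi k p" if "S \<in> Psi k0 p0" for S
    using split[OF that] by blast
qed

lemma lcompD_act: "lcompD (act lam 0 F T) = act lam (1/2) (sp_sigma F) (lcompD T)"
  using act_lcompD[of lam "sp_sigma F" T] by simp

lemma Kdirect_Dop_lcompD: "Kdirect lam (1/2) Dop (Dop_upto 0) (lcompD ` Dop)"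
proof (rule Kdirect_Dop_image[where lam' = lam and mu' = 0])
  show "\<exists>G. act lam (1/2) F (lcompD x) = lcompD (act lam 0 G x)" for F x
    using act_lcompD by blast
  show "T = 0" if "T \<in> Dop" "lcompD T \<in> Dop_upto 0" for T
    using that Dop_iff_Dop_upto Dop_lcompD_Dop_upto_0_eq_0 by blast
  show "\<exists>T\<in>Dop. S - lcompD T \<in> Dop_upto 0" if "S \<in> Dop" for S
    using that Dop_iff_Dop_upto Dop_upto_split_lcompD Dop_upto_Dop by meson
qed (simp_all add: lcompD_add lcompD_sscale Dop_lcompD)

lemma Kdirect_Dop_rcompD: "Kdirect 0 mu Dop (Dop_upto 0) (rcompD ` Dop)"
proof (rule Kdirect_Dop_image[where lam' = "1/2" and mu' = mu])
  show "\<exists>G. act 0 mu F (rcompD x) = rcompD (act (1/2) mu G x)" for F x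
    using act_rcompD by blast
  show "T = 0" if "T \<in> Dop" "rcompD T \<in> Dop_upto 0" for T
    using that Dop_iff_Dop_upto Dop_rcompD_Dop_upto_0_eq_0 by blast
  show "\<exists>T\<in>Dop. S - rcompD T \<in> Dop_upto 0" if "S \<in> Dop" for S
    using that Dop_iff_Dop_upto Dop_upto_split_rcompD Dop_upto_Dop by meson
qed (simp_all add: rcompD_add rcompD_sscale Dop_rcompD)

lemma Kdirect_Dop_lcompD_rcompD:
  "Kdirect 0 (1/2) Dop (Dop_upto 1) ((\<lambda>T. lcompD (rcompD T)) ` Dop)"
proof (rule Kdirect_Dop_image[where lam' = "1/2" and mu' = 0])
  show "\<exists>G. act 0 (1/2) F (lcompD (rcompD x)) = lcompD (rcompD (act (1/2) 0 G x))" for F x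
    using act_lcompD act_rcompD by metis
  show "T = 0" if "T \<in> Dop" "lcompD (rcompD T) \<in> Dop_upto 1" for T
    using that Dop_iff_Dop_upto Dop_upto_of_lcompD[OF Dop_upto_rcompD]
      Dop_rcompD_Dop_upto_0_eq_0 One_nat_def by metis
  show "\<exists>T\<in>Dop. S - lcompD (rcompD T) \<in> Dop_upto 1" if "S \<in> Dop" for S
    using that Dop_iff_Dop_upto Dop_upto_split_lcompD_rcompD Dop_upto_Dop by meson
qed (simp_all add: lcompD_add lcompD_sscale rcompD_add rcompD_sscale Dop_lcompD Dop_rcompD)

lemma Kdirect_Psi_lcompD:
  "Kdirect lam 0 (Psi (-1/2) True) (Psi (-1) False) {T \<in> Psi (-1/2) True. lcompD T \<in> Dop_upto 0}"
proof (rule Kdirect_Psi_preimage[where lam' = lam and mu' = "1/2"])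
  show "\<exists>G. lcompD (act lam 0 F x) = act lam (1/2) G (lcompD x)" for F x
    using lcompD_act by blast
qed (use Psi_neg1_raise Psi_lcompD_Dop_upto_eq_0 Psi_split_lcompD
      in \<open>auto simp: lcompD_add lcompD_sscale\<close>)

lemma Kdirect_Psi_rcompD:
  "Kdirect (1/2) mu (Psi (-1/2) True) (Psi (-1) False) {T \<in> Psi (-1/2) True. rcompD T \<in> Dop_upto 0}"
proof (rule Kdirect_Psi_preimage[where lam' = 0 and mu' = mu])
  show "\<exists>G. rcompD (act (1/2) mu F x) = act 0 mu G (rcompD x)" for F x
    using act_rcompD by metis
qed (use Psi_neg1_raise Psi_rcompD_Dop_upto_eq_0 Psi_split_rcompD
      in \<open>auto simp: rcompD_add rcompD_sscale\<close>)

lemma Kdirect_Psi_lcompD_rcompD: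
  "Kdirect (1/2) 0 (Psi (-1/2) True) (Psi (-3/2) True)
     {T \<in> Psi (-1/2) True. lcompD (rcompD T) \<in> Dop_upto 1}"
proof (rule Kdirect_Psi_preimage[where lam' = 0 and mu' = "1/2"])
  show "\<exists>G. lcompD (rcompD (act (1/2) 0 F x)) = act 0 (1/2) G (lcompD (rcompD x))" for F x
    using act_rcompD lcompD_act by metis
  show "T = 0" if "T \<in> Psi (-3/2) True" "lcompD (rcompD T) \<in> Dop_upto 1" for T
    using that Psi_neg3half_rcompD Psi_lcompD_Dop_upto_eq_0 rcompD_eq_0_iff by blast
qed (use Psi_neg1_raise Psi_neg3half_raise Psi_split_lcompD_rcompD
      in \<open>auto simp: lcompD_add lcompD_sscale rcompD_add rcompD_sscale\<close>)

theorem lemma3p5: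
  fixes lam mu :: complex
  shows "Kdirect lam (1/2) Dop (Dop_le 0) (dbar_left ` Dop) \<and>
    Kdirect lam 0 (Psi (-1/2) True) (Psi (-1) False)
           {T \<in> Psi (-1/2) True. dbar_left T \<in> Dop_le 0} \<and>
    Kdirect 0 mu Dop (Dop_le 0) (dbar_right ` Dop) \<and>
    Kdirect (1/2) mu (Psi (-1/2) True) (Psi (-1) False)
           {T \<in> Psi (-1/2) True. dbar_right T \<in> Dop_le 0} \<and>
    Kdirect 0 (1/2) Dop (Dop_le (1/2)) ((\<lambda>T. dbar_left (dbar_right T)) ` Dop) \<and>
    Kdirect (1/2) 0 (Psi (-1/2) True) (Psi (-3/2) True)
           {T \<in> Psi (-1/2) True. dbar_left (dbar_right T) \<in> Dop_le (1/2)}"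
  unfolding dbar_left_def dbar_right_def Dop_le_0 Dop_le_half
  using Kdirect_Dop_lcompD Kdirect_Psi_lcompD Kdirect_Dop_rcompD Kdirect_Psi_rcompD
    Kdirect_Dop_lcompD_rcompD Kdirect_Psi_lcompD_rcompD
  by blast

end
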